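(* For every ordinal $\alpha\in\{1,2,3,\dots\}\cup\{\omega\}\cup\{\omega+m\mid m=1,2,\dots\}\cup\{2\omega\}$, the $\alpha$-th hypercenter of $U_3$ is $$Z_\alpha(U_3)=\{(x_1+f_1(x_2,x_3),\,x_2,\,x_3)\mid f_1\in S_\alpha\}.$$
   Context: $K$ is a field of characteristic zero, $A_3=K\langle x_1,x_2,x_3\rangle$ the free associative $K$-algebra with unity. $U_3$ is the group of unitriangular automorphisms of $A_3$: all automorphisms $(x_1+f_1,\,x_2+f_2,\,x_3+f_3)$ (meaning $x_i\mapsto x_i+f_i$) with $f_1\in K\langle x_2,x_3\rangle$, $f_2\in K\langle x_3\rangle$, $f_3\in K$. Let $V$ be the group of automorphisms $\varphi=(x_2+g(x_3),\,x_3+h)$ of $K\langle x_2,x_3\rangle$ with $g\in K\langle x_3\rangle$, $h\in K$, and for $f\in K\langle x_2,x_3\rangle$ write $f^\varphi=f(x_2+g(x_3),x_3+h)$. Define subsets of $K\langle x_2,x_3\rangle$: $S_1=S=\{f\mid f^\varphi=f\text{ for all }\varphi\in V\}$; $S_{m+1}=\{f\mid f^\varphi-f\in S_m\text{ for all }\varphi\in V\}$ for $m\ge1$; $S_\omega=\bigcup_{m\ge1}S_m$; $S_{\omega+1}=\{f\mid f^\varphi-f\in S_\omega\ \forall\varphi\in V\}$; $S_{\omega+m+1}=\{f\mid f^\varphi-f\in S_{\omega+m}\ \forall\varphi\in V\}$ for $m\ge1$; $S_{2\omega}=\bigcup_{m\ge1}S_{\omega+m}$. Upper central series of a group $G$: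 $Z_0=1$; for successor ordinals $Z_k=\{g\in G\mid [g,h]\in Z_{k-1}\ \forall h\in G\}$; for limit ordinals $Z_\alpha=\bigcup_{\beta<\alpha}Z_\beta$; $\omega$ is the first infinite ordinal. *)

theory Defs
  imports "HOL-Algebra.Group"
begin

text \<open>A noncommutative polynomial is a function from words (lists of variable indices)
  to coefficients; variable x_i is the letter i.  Only finitely supported functions are
  polynomials (see in_vars).\<close>

type_synonym 'k ncpoly = "nat list \<Rightarrow> 'k"

definition pzero :: "'k::field ncpoly" where "pzero = (\<lambda>w. 0)"
definition pone :: "'k::field ncpoly" where "pone = (\<lambda>w. if w = [] then 1 else 0)"
definition pconst :: "'k::field \<Rightarrow> 'k ncpoly" where "pconst c = (\<lambda>w. if w = [] then c else 0)"
definition pvar :: "nat \<Rightarrow> 'k::field ncpoly" where "pvar i = (\<lambda>w. if w = [i] then 1 else 0)"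
definition padd :: "'k::field ncpoly \<Rightarrow> 'k ncpoly \<Rightarrow> 'k ncpoly" where
  "padd p q = (\<lambda>w. p w + q w)"
definition psub :: "'k::field ncpoly \<Rightarrow> 'k ncpoly \<Rightarrow> 'k ncpoly" where
  "psub p q = (\<lambda>w. p w - q w)"
definition pmul :: "'k::field ncpoly \<Rightarrow> 'k ncpoly \<Rightarrow> 'k ncpoly" where
  "pmul p q = (\<lambda>w. \<Sum>i\<in>{0..length w}. p (take i w) * q (drop i w))"

definition in_vars :: "nat set \<Rightarrow> 'k::field ncpoly \<Rightarrow> bool" where
  "in_vars V p \<longleftrightarrow> finite {w. p w \<noteq> 0} \<and> (\<forall>w. p w \<noteq> 0 \<longrightarrow> set w \<subseteq> V)"

definition eval_word :: "(nat \<Rightarrow> 'k::field ncpoly) \<Rightarrow> nat list \<Rightarrow> 'k ncpoly" where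
  "eval_word \<sigma> w = foldr (\<lambda>i acc. pmul (\<sigma> i) acc) w pone"

definition subst :: "(nat \<Rightarrow> 'k::field ncpoly) \<Rightarrow> 'k ncpoly \<Rightarrow> 'k ncpoly" where
  "subst \<sigma> p = (\<lambda>v. \<Sum>w\<in>{w. p w \<noteq> 0}. p w * eval_word \<sigma> w v)"

text \<open>(f1,f2,f3) represents the automorphism x_1 \<mapsto> x_1+f1, x_2 \<mapsto> x_2+f2, x_3 \<mapsto> x_3+f3.\<close>
definition tri_subst :: "'k::field ncpoly \<times> 'k ncpoly \<times> 'k ncpoly \<Rightarrow> nat \<Rightarrow> 'k ncpoly" where
  "tri_subst f i = (case f of (f1, f2, f3) \<Rightarrow>
      if i = 1 then padd (pvar 1) f1 else if i = 2 then padd (pvar 2) f2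
      else if i = 3 then padd (pvar 3) f3 else pvar i)"

text \<open>Group product = composition of automorphisms (phi o psi)(x_i) = phi(psi(x_i)).\<close>
definition U3_mult :: "'k::field ncpoly \<times> 'k ncpoly \<times> 'k ncpoly
    \<Rightarrow> 'k ncpoly \<times> 'k ncpoly \<times> 'k ncpoly \<Rightarrow> 'k ncpoly \<times> 'k ncpoly \<times> 'k ncpoly" where
  "U3_mult f g = (case f of (f1, f2, f3) \<Rightarrow> case g of (g1, g2, g3) \<Rightarrow>
      (padd f1 (subst (tri_subst f) g1), padd f2 (subst (tri_subst f) g2),
       padd f3 (subst (tri_subst f) g3)))"

definition U3 :: "('k::field ncpoly \<times> 'k ncpoly \<times> 'k ncpoly) monoid" where
  "U3 = \<lparr> carrier = {(f1, f2, f3). in_vars {2,3} f1 \<and> in_vars {3} f2 \<and> in_vars {} f3},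
          mult = U3_mult, one = (pzero, pzero, pzero) \<rparr>"

text \<open>Fin n = n, OmegaPlus m = omega + m (OmegaPlus 0 = omega), TwoOmega = 2 omega.\<close>
datatype ord_idx = Fin nat | OmegaPlus nat | TwoOmega

fun stage :: "('a set \<Rightarrow> 'a set) \<Rightarrow> 'a set \<Rightarrow> ord_idx \<Rightarrow> 'a set" where
  "stage F B (Fin n) = (F ^^ n) B"
| "stage F B (OmegaPlus m) = (F ^^ m) (\<Union>n. (F ^^ n) B)"
| "stage F B TwoOmega = (\<Union>m. (F ^^ m) (\<Union>n. (F ^^ n) B))"

definition commutator :: "('a, 'b) monoid_scheme \<Rightarrow> 'a \<Rightarrow> 'a \<Rightarrow> 'a" where
  "commutator G g h = inv\<^bsub>G\<^esub> g \<otimes>\<^bsub>G\<^esub> inv\<^bsub>G\<^esub> h \<otimes>\<^bsub>G\<^esub> g \<otimes>\<^bsub>G\<^esub> h"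

definition center_step :: "('a, 'b) monoid_scheme \<Rightarrow> 'a set \<Rightarrow> 'a set" where
  "center_step G Y = {g \<in> carrier G. \<forall>h \<in> carrier G. commutator G g h \<in> Y}"

definition hypercenter :: "('a, 'b) monoid_scheme \<Rightarrow> ord_idx \<Rightarrow> 'a set" where
  "hypercenter G \<alpha> = stage (center_step G) {\<one>\<^bsub>G\<^esub>} \<alpha>"

text \<open>V: automorphisms (x_2 + g(x_3), x_3 + h) of K<x_2,x_3>, g \<in> K<x_3>, h \<in> K.\<close>
definition Vset :: "('k::field ncpoly \<times> 'k ncpoly) set" where
  "Vset = {(g, h). in_vars {3} g \<and> in_vars {} h}"

definition V_subst :: "'k::field ncpoly \<times> 'k ncpoly \<Rightarrow> nat \<Rightarrow> 'k ncpoly" where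
  "V_subst \<phi> i = (case \<phi> of (g, h) \<Rightarrow>
      if i = 2 then padd (pvar 2) g else if i = 3 then padd (pvar 3) h else pvar i)"

text \<open>f^phi = f(x_2 + g(x_3), x_3 + h).\<close>
definition Vact :: "'k::field ncpoly \<Rightarrow> 'k ncpoly \<times> 'k ncpoly \<Rightarrow> 'k ncpoly" where
  "Vact f \<phi> = subst (V_subst \<phi>) f"

definition S_step :: "'k::field ncpoly set \<Rightarrow> 'k ncpoly set" where
  "S_step Y = {f. in_vars {2,3} f \<and> (\<forall>\<phi>\<in>Vset. psub (Vact f \<phi>) f \<in> Y)}"

definition S_idx :: "ord_idx \<Rightarrow> 'k::field ncpoly set" where
  "S_idx \<alpha> = stage S_step {pzero} \<alpha>"

end

theory Submission
  imports Defs "HOL-Computational_Algebra.Polynomial"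
begin

text \<open>
  Write an element of U_3 as a triple (f1,f2,f3) and let shifts1 A be the set of triples
  (f1,0,0) with f1 \<in> A.  Both sides are built by the
  same transfinite recursion, so by stage_transfer it suffices to prove the step equation
      center_step U3 (shifts1 B) = shifts1 (S_step B)    for every B \<subseteq> S_{2\<omega>}.
  For (a,0,0) the commutator with \<phi>^{-1} is (\<phi>(a) - a, 0, 0) (commutator_shift1), which settles
  the elements of the form (a,0,0).  That there are no others (center_step_only_shifts1) is the
  heart of the argument: commuting with (0,x_3,0) modulo shifts1 B forces f3 = 0, commuting
  with (0,0,1) makes f2 a constant c, and commuting with (x_2^3,0,0) puts x_2^3 - (x_2 - c)^3
  into S_{2\<omega>}, impossible for c \<noteq> 0 (cube_difference_not_in_S_two_omega).  The latter rests on
  a degree argument with finite differences in K[x_3], where characteristic zero is used.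
\<close>

lemma (in monoid) group_r_invI:
  assumes r_inv_ex: "\<And>x. x \<in> carrier G \<Longrightarrow> \<exists>y\<in>carrier G. x \<otimes> y = \<one>"
  shows "group G"
proof (rule group_l_invI)
  fix x assume x: "x \<in> carrier G"
  obtain y where y: "y \<in> carrier G" "x \<otimes> y = \<one>" using r_inv_ex[OF x] by blast
  obtain z where z: "z \<in> carrier G" "y \<otimes> z = \<one>" using r_inv_ex[OF y(1)] by blast
  have "x = x \<otimes> (y \<otimes> z)" using x z by simp
  also have "\<dots> = (x \<otimes> y) \<otimes> z" using x y(1) z(1) by (simp only: m_assoc)
  also have "\<dots> = z" using y z by simp
  finally show "\<exists>y\<in>carrier G. y \<otimes> x = \<one>" using y z by blast
qed

lemma (in group) commutator_closed:
  "x \<in> carrier G \<Longrightarrow> y \<in> carrier G \<Longrightarrow> commutator G x y \<in> carrier G"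
  by (simp add: commutator_def)

lemma (in group) commutator_alt:
  assumes x: "x \<in> carrier G" and y: "y \<in> carrier G"
  shows "commutator G x y = inv (y \<otimes> x) \<otimes> (x \<otimes> y)"
proof -
  have "commutator G x y = (inv x \<otimes> inv y) \<otimes> (x \<otimes> y)"
    using x y by (simp add: commutator_def m_assoc)
  then show ?thesis using x y by (simp add: inv_mult_group)
qed

lemma (in group) commutator_swap:
  assumes x: "x \<in> carrier G" and y: "y \<in> carrier G"
  shows "commutator G y x = inv (commutator G x y)"
  using x y by (simp add: commutator_alt inv_mult_group)

lemma (in group) commutator_decomp:
  assumes x: "x \<in> carrier G" and y: "y \<in> carrier G"
  shows "x \<otimes> y = y \<otimes> x \<otimes> commutator G x y"
proof -
  have yx: "y \<otimes> x \<in> carrier G" and xy: "x \<otimes> y \<in> carrier G" using x y by auto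
  have "y \<otimes> x \<otimes> commutator G x y = (y \<otimes> x) \<otimes> (inv (y \<otimes> x) \<otimes> (x \<otimes> y))"
    using x y by (simp add: commutator_alt)
  also have "\<dots> = ((y \<otimes> x) \<otimes> inv (y \<otimes> x)) \<otimes> (x \<otimes> y)"
    using yx xy by (simp only: m_assoc inv_closed)
  also have "\<dots> = x \<otimes> y" using yx xy by simp
  finally show ?thesis by simp
qed

lemma (in group) commutator_inv_eq:
  assumes x: "x \<in> carrier G" and y: "y \<in> carrier G" and t: "t \<in> carrier G"
    and conj: "y \<otimes> x = t \<otimes> (x \<otimes> y)" and comm: "t \<otimes> x = x \<otimes> t"
  shows "commutator G x (inv y) = t"
proof -
  have "commutator G x (inv y) = inv x \<otimes> (y \<otimes> x) \<otimes> inv y"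
    using x y by (simp add: commutator_def m_assoc)
  also have "\<dots> = inv x \<otimes> (t \<otimes> x) \<otimes> (y \<otimes> inv y)"
    using x y t by (simp add: conj m_assoc)
  also have "\<dots> = inv x \<otimes> (x \<otimes> t)" using x y t by (simp add: comm)
  also have "\<dots> = t" using x t by (simp flip: m_assoc)
  finally show ?thesis .
qed

section \<open>Finite differences of univariate polynomials\<close>

text \<open>The forward difference q(t+1) - q(t).  In characteristic zero it lowers the degree by
  exactly one (fdiff_degree); hence only constants are invariant under t \<mapsto> t+1.\<close>

definition fdiff :: "'k::field poly \<Rightarrow> 'k poly" where "fdiff q = pcompose q [:1, 1:] - q"

lemma fdiff_pCons: "fdiff (pCons a q) = pcompose q [:1,1:] + pCons 0 (fdiff q)"
  by (simp add: fdiff_def pcompose_pCons algebra_simps)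

lemma degree_shift1: "degree (pcompose (q::'k::field poly) [:1,1:]) = degree q"
  by (simp add: degree_pcompose)

lemma lead_coeff_shift1: "lead_coeff (pcompose (q::'k::field poly) [:1,1:]) = lead_coeff q"
  by (simp add: lead_coeff_comp)

lemma fdiff_high: "k \<ge> degree q \<Longrightarrow> coeff (fdiff (q::'k::field poly)) k = 0"
proof -
  assume k: "k \<ge> degree q"
  show ?thesis
  proof (cases "k = degree q")
    case True
    then show ?thesis using lead_coeff_shift1[of q] degree_shift1[of q] by (simp add: fdiff_def)
  next
    case False
    then have "k > degree q" using k by simp
    then show ?thesis using degree_shift1[of q] by (simp add: fdiff_def coeff_eq_0)
  qed
qed

lemma fdiff_top: "degree q \<ge> 1 \<Longrightarrow> coeff (fdiff (q::'k::field poly)) (degree q - 1) = of_nat (degree q) * lead_coeff q"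
proof (induction q)
  case 0 then show ?case by simp
next
  case (pCons a q)
  have q0: "q \<noteq> 0" using pCons.prems by (auto)
  have dq: "degree (pCons a q) = Suc (degree q)" using q0 by (rule degree_pCons_eq)
  have c1: "coeff (pcompose q [:1,1:]) (degree q) = lead_coeff q" using lead_coeff_shift1[of q] degree_shift1[of q] by simp
  show ?case
  proof (cases "degree q = 0")
    case True
    then show ?thesis using c1 dq q0 by (simp add: fdiff_pCons)
  next
    case False
    then have "coeff (fdiff q) (degree q - 1) = of_nat (degree q) * lead_coeff q" using pCons.IH by simp
    moreover have "coeff (pCons 0 (fdiff q)) (degree q) = coeff (fdiff q) (degree q - 1)"
      using False by (cases "degree q") auto
    ultimately show ?thesis using c1 dq q0 by (simp add: fdiff_pCons algebra_simps)
  qed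
qed

lemma fdiff_degree: assumes "degree (q::'k::field_char_0 poly) = Suc d"
  shows "fdiff q \<noteq> 0" "degree (fdiff q) = d"
proof -
  have q0: "q \<noteq> 0" using assms by auto
  have c: "coeff (fdiff q) d = of_nat (Suc d) * lead_coeff q" using fdiff_top[of q] assms by simp
  have "of_nat (Suc d) \<noteq> (0::'k)" by (rule of_nat_neq_0)
  then have cn: "coeff (fdiff q) d \<noteq> 0" using q0 c by (simp del: of_nat_Suc)
  then show "fdiff q \<noteq> 0" by auto
  have "degree (fdiff q) \<le> d" by (rule degree_le) (auto intro!: fdiff_high simp: assms)
  moreover have "d \<le> degree (fdiff q)" using cn by (rule le_degree)
  ultimately show "degree (fdiff q) = d" by simp
qed

lemma fdiff_zero_const: assumes "fdiff (q::'k::field_char_0 poly) = 0" shows "q = [:coeff q 0:]"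
proof (cases "degree q")
  case 0 then show ?thesis by (simp add: degree_0_id)
next
  case (Suc d) then show ?thesis using fdiff_degree(1)[OF Suc] assms by simp
qed

lemma stage_subset_TwoOmega: "stage F B \<alpha> \<subseteq> stage F B TwoOmega"
proof (cases \<alpha>)
  case (Fin n)
  have "(F ^^ n) B \<subseteq> (F ^^ 0) (\<Union>n. (F ^^ n) B)" by auto
  also have "\<dots> \<subseteq> (\<Union>m. (F ^^ m) (\<Union>n. (F ^^ n) B))" by (rule UN_upper) simp
  finally show ?thesis using Fin by simp
qed auto

lemma funpow_subset_step:
  assumes "mono F" "B \<subseteq> F B"
  shows "(F ^^ n) B \<subseteq> F ((F ^^ n) B)"
  using funpow_mono[OF assms] by (simp add: funpow_swap1)

lemma Union_funpow_subset_step: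
  assumes mono: "mono F" and B: "B \<subseteq> F B"
  shows "(\<Union>n. (F ^^ n) B) \<subseteq> F (\<Union>n. (F ^^ n) B)"
proof -
  have "(F ^^ n) B \<subseteq> F (\<Union>n. (F ^^ n) B)" for n
    using funpow_subset_step[OF assms, of n] monoD[OF mono, of "(F ^^ n) B" "\<Union>n. (F ^^ n) B"] by auto
  then show ?thesis by blast
qed

lemma stage_subset_step:
  assumes mono: "mono F" and B: "B \<subseteq> F B"
  shows "stage F B \<alpha> \<subseteq> F (stage F B \<alpha>)"
proof (cases \<alpha>)
  case (Fin n) then show ?thesis using funpow_subset_step[OF assms] by simp
next
  case (OmegaPlus m) then show ?thesis
    using funpow_subset_step[OF mono Union_funpow_subset_step[OF assms]] by simp
next
  case TwoOmega then show ?thesis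
    using Union_funpow_subset_step[OF mono Union_funpow_subset_step[OF assms]] by simp
qed

lemma stage_transfer:
  fixes T :: "'b set \<Rightarrow> 'a set"
  assumes step: "\<And>B. B \<subseteq> stage G B0 TwoOmega \<Longrightarrow> F (T B) = T (G B)"
    and union: "\<And>A :: nat \<Rightarrow> 'b set. (\<Union>n. T (A n)) = T (\<Union>n. A n)"
  shows "stage F (T B0) \<alpha> = T (stage G B0 \<alpha>)"
proof -
  have iter: "(F ^^ n) (T B) = T ((G ^^ n) B)"
    if below: "\<And>k. (G ^^ k) B \<subseteq> stage G B0 TwoOmega" for B n
    by (induction n) (simp_all add: step[OF below])
  have fin: "(F ^^ n) (T B0) = T ((G ^^ n) B0)" for n
    by (rule iter) (use stage_subset_TwoOmega[of G B0 "Fin _"] in simp)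
  have omega: "(F ^^ m) (T (\<Union>n. (G ^^ n) B0)) = T ((G ^^ m) (\<Union>n. (G ^^ n) B0))" for m
    by (rule iter) (use stage_subset_TwoOmega[of G B0 "OmegaPlus _"] in simp)
  show ?thesis
    by (cases \<alpha>) (simp_all add: fin omega union)
qed

section \<open>Noncommutative polynomials as a ring\<close>

definition splits :: "nat list \<Rightarrow> (nat list \<times> nat list) set" where
  "splits w = {(u,v). u @ v = w}"

lemma splits_img: "splits w = (\<lambda>i. (take i w, drop i w)) ` {0..length w}"
proof -
  have "(u,v) \<in> (\<lambda>i. (take i w, drop i w)) ` {0..length w}" if "u @ v = w" for u v
    using that by (intro image_eqI[of _ _ "length u"]) auto
  then show ?thesis unfolding splits_def by auto
qed

lemma finite_splits[simp]: "finite (splits w)"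
  unfolding splits_img by simp

lemma pmul_splits: "pmul p q w = (\<Sum>(u,v)\<in>splits w. p u * q v)"
proof -
  have inj: "inj_on (\<lambda>i. (take i w, drop i w)) {0..length w}"
    by (rule inj_onI) (metis append_take_drop_id length_take min_absorb2 atLeastAtMost_iff prod.inject)
  show ?thesis unfolding pmul_def splits_img
    by (simp add: sum.reindex[OF inj])
qed

text \<open>Factorisations into three words; both bracketings of a triple product sum over them.\<close>
definition splits3 :: "nat list \<Rightarrow> (nat list \<times> nat list \<times> nat list) set" where
  "splits3 w = {(u,v,x). u @ v @ x = w}"

lemma pmul_pmul_left: "pmul (pmul p q) r w = (\<Sum>(u,v,x)\<in>splits3 w. p u * q v * r x)"
proof -
  have "pmul (pmul p q) r w = (\<Sum>(a,x)\<in>splits w. (\<Sum>(u,v)\<in>splits a. p u * q v * r x))"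
    by (simp add: pmul_splits sum_distrib_right case_prod_unfold)
  also have "\<dots> = (\<Sum>ax\<in>splits w. (\<Sum>uv\<in>splits (fst ax). p (fst uv) * q (snd uv) * r (snd ax)))"
    by (simp add: case_prod_unfold)
  also have "\<dots> = (\<Sum>z\<in>(SIGMA ax:splits w. splits (fst ax)). p (fst (snd z)) * q (snd (snd z)) * r (snd (fst z)))"
    by (subst sum.Sigma) (auto simp: case_prod_unfold)
  also have "\<dots> = (\<Sum>(u,v,x)\<in>splits3 w. p u * q v * r x)"
    by (rule sum.reindex_bij_witness[where i="\<lambda>(u,v,x). ((u@v,x),(u,v))" and j="\<lambda>((a,x),(u,v)). (u,v,x)"])
       (auto simp: splits_def splits3_def)
  finally show ?thesis .
qed

lemma pmul_pmul_right: "pmul p (pmul q r) w = (\<Sum>(u,v,x)\<in>splits3 w. p u * q v * r x)"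
proof -
  have "pmul p (pmul q r) w = (\<Sum>(u,b)\<in>splits w. (\<Sum>(v,x)\<in>splits b. p u * q v * r x))"
    by (simp add: pmul_splits sum_distrib_left case_prod_unfold mult.assoc)
  also have "\<dots> = (\<Sum>ub\<in>splits w. (\<Sum>vx\<in>splits (snd ub). p (fst ub) * q (fst vx) * r (snd vx)))"
    by (simp add: case_prod_unfold)
  also have "\<dots> = (\<Sum>z\<in>(SIGMA ub:splits w. splits (snd ub)). p (fst (fst z)) * q (fst (snd z)) * r (snd (snd z)))"
    by (subst sum.Sigma) (auto simp: case_prod_unfold)
  also have "\<dots> = (\<Sum>(u,v,x)\<in>splits3 w. p u * q v * r x)"
    by (rule sum.reindex_bij_witness[where i="\<lambda>(u,v,x). ((u,v@x),(v,x))" and j="\<lambda>((u,b),(v,x)). (u,v,x)"])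
       (auto simp: splits_def splits3_def)
  finally show ?thesis .
qed

lemma pmul_assoc: "pmul (pmul p q) r = pmul p (pmul q r)"
  by (simp add: fun_eq_iff pmul_pmul_left pmul_pmul_right)

lemma pmul_pone_left: "pmul pone p = p"
proof
  fix w
  have "pmul pone p w = (\<Sum>i\<in>{0..length w}. (if i = 0 then p w else 0))"
    unfolding pmul_def pone_def by (intro sum.cong) auto
  then show "pmul pone p w = p w" by simp
qed

lemma pmul_pone_right: "pmul p pone = p"
proof
  fix w
  have "pmul p pone w = (\<Sum>i\<in>{0..length w}. (if i = length w then p w else 0))"
    unfolding pmul_def pone_def by (intro sum.cong) auto
  then show "pmul p pone w = p w" by simp
qed

lemma pmul_padd_left: "pmul (padd p q) r = padd (pmul p r) (pmul q r)"
  unfolding pmul_def padd_def by (auto simp: distrib_right sum.distrib)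

lemma pmul_padd_right: "pmul r (padd p q) = padd (pmul r p) (pmul r q)"
  unfolding pmul_def padd_def by (auto simp: distrib_left sum.distrib)

text \<open>A copy of the coefficient functions carrying the ring structure (padd, pmul, ...), so that
  the type-class algebra of HOL applies.\<close>
typedef (overloaded) 'k nc = "UNIV :: (nat list \<Rightarrow> 'k::field) set" by auto
setup_lifting type_definition_nc

instantiation nc :: (field) ring_1
begin
lift_definition zero_nc :: "'a nc" is pzero .
lift_definition one_nc :: "'a nc" is pone .
lift_definition plus_nc :: "'a nc \<Rightarrow> 'a nc \<Rightarrow> 'a nc" is padd .
lift_definition minus_nc :: "'a nc \<Rightarrow> 'a nc \<Rightarrow> 'a nc" is psub .
lift_definition uminus_nc :: "'a nc \<Rightarrow> 'a nc" is "\<lambda>p w. - p w" .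
lift_definition times_nc :: "'a nc \<Rightarrow> 'a nc \<Rightarrow> 'a nc" is pmul .
instance
proof
  fix a b c :: "'a nc"
  show "a * b * c = a * (b * c)" by transfer (rule pmul_assoc)
  show "(a + b) * c = a * c + b * c" by transfer (rule pmul_padd_left)
  show "a * (b + c) = a * b + a * c" by transfer (rule pmul_padd_right)
  show "1 * a = a" by transfer (rule pmul_pone_left)
  show "a * 1 = a" by transfer (rule pmul_pone_right)
  show "a + b + c = a + (b + c)" by transfer (auto simp: padd_def)
  show "a + b = b + a" by transfer (auto simp: padd_def)
  show "0 + a = a" by transfer (auto simp: padd_def pzero_def)
  show "- a + a = 0" by transfer (auto simp: padd_def pzero_def)
  show "a - b = a + - b" by transfer (auto simp: padd_def psub_def)
  show "(0::'a nc) \<noteq> 1" by transfer (auto simp: pzero_def pone_def fun_eq_iff)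
qed
end

lemma Rep_zero: "Rep_nc 0 = pzero" by transfer simp
lemma Rep_one[simp]: "Rep_nc 1 = pone" by transfer simp
lemma Rep_plus: "Rep_nc (p + q) = padd (Rep_nc p) (Rep_nc q)" by transfer simp
lemma Rep_minus: "Rep_nc (p - q) = psub (Rep_nc p) (Rep_nc q)" by transfer simp
lemma Rep_times: "Rep_nc (p * q) = pmul (Rep_nc p) (Rep_nc q)" by transfer simp

lemma Rep_plus_app[simp]: "Rep_nc (p + q) w = Rep_nc p w + Rep_nc q w" by (simp add: Rep_plus padd_def)
lemma Rep_minus_app[simp]: "Rep_nc (p - q) w = Rep_nc p w - Rep_nc q w" by (simp add: Rep_minus psub_def)
lemma Rep_uminus_app[simp]: "Rep_nc (- p) w = - Rep_nc p w"
proof -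
  have "Rep_nc (- p) = (\<lambda>w. - Rep_nc p w)" by transfer simp
  then show ?thesis by simp
qed
lemma Rep_zero_app[simp]: "Rep_nc 0 w = 0" by (simp add: Rep_zero pzero_def)

lemma Rep_sum: "Rep_nc (sum f A) w = (\<Sum>x\<in>A. Rep_nc (f x) w)"
  by (induction A rule: infinite_finite_induct) auto

lemma nc_eqI: "(\<And>w. Rep_nc p w = Rep_nc q w) \<Longrightarrow> p = q"
  by (metis Rep_nc_inject ext)

lemma Rep_eq_pzero: "Rep_nc p = pzero \<longleftrightarrow> p = 0"
  by (metis Rep_nc_inject Rep_zero)

definition scalar :: "'k::field \<Rightarrow> 'k nc" where "scalar c = Abs_nc (pconst c)"
definition X :: "nat \<Rightarrow> 'k::field nc" where "X i = Abs_nc (pvar i)"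
definition word_mon :: "nat list \<Rightarrow> 'k::field nc" where
  "word_mon w = Abs_nc (\<lambda>v. if v = w then 1 else 0)"

lemma Rep_scalar: "Rep_nc (scalar c) = pconst c" unfolding scalar_def by (simp add: Abs_nc_inverse)
lemma Rep_X: "Rep_nc (X i) = pvar i" unfolding X_def by (simp add: Abs_nc_inverse)
lemma Rep_word_mon: "Rep_nc (word_mon w) v = (if v = w then 1 else 0)"
  unfolding word_mon_def by (simp add: Abs_nc_inverse)

lemma scalar_mult_app[simp]: "Rep_nc (scalar c * p) w = c * Rep_nc p w"
proof -
  have "Rep_nc (scalar c * p) w = (\<Sum>i\<in>{0..length w}. (if i = 0 then c * Rep_nc p w else 0))"
    unfolding Rep_times Rep_scalar pmul_def pconst_def by (intro sum.cong) auto
  then show ?thesis by simp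
qed

lemma mult_scalar_app[simp]: "Rep_nc (p * scalar c) w = Rep_nc p w * c"
proof -
  have "Rep_nc (p * scalar c) w = (\<Sum>i\<in>{0..length w}. (if i = length w then Rep_nc p w * c else 0))"
    unfolding Rep_times Rep_scalar pmul_def pconst_def by (intro sum.cong) auto
  then show ?thesis by simp
qed

lemma scalar_comm: "scalar c * p = p * scalar c"
  by (rule nc_eqI) (simp add: mult.commute)

lemma scalar_0[simp]: "scalar 0 = 0" by (rule nc_eqI) (simp add: Rep_scalar pconst_def)
lemma scalar_1[simp]: "scalar 1 = 1" by (rule nc_eqI) (simp add: Rep_scalar pconst_def pone_def)
lemma scalar_add: "scalar (a + b) = scalar a + scalar b" by (rule nc_eqI) (simp add: Rep_scalar pconst_def)
lemma scalar_uminus: "scalar (- a) = - scalar a" by (rule nc_eqI) (simp add: Rep_scalar pconst_def)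
lemma scalar_mult: "scalar (a * b) = scalar a * scalar b" by (rule nc_eqI) (simp add: Rep_scalar pconst_def)

lemma word_mon_Nil: "word_mon [] = 1"
  by (rule nc_eqI) (simp add: Rep_word_mon pone_def)

lemma word_mon_append: "word_mon (u @ v) = word_mon u * word_mon v"
proof (rule nc_eqI)
  fix w
  have "Rep_nc (word_mon u * word_mon v) w
      = (\<Sum>(a,b)\<in>splits w. (if a = u then 1 else 0) * (if b = v then 1 else 0))"
    by (simp add: Rep_times pmul_splits Rep_word_mon)
  also have "\<dots> = (\<Sum>ab\<in>splits w. if ab = (u,v) then 1 else 0)"
    by (intro sum.cong) (auto split: if_splits)
  also have "\<dots> = (if (u,v) \<in> splits w then 1 else 0)"
    by (rule sum.delta[OF finite_splits])
  also have "\<dots> = (if u @ v = w then 1 else 0)"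
    by (simp add: splits_def)
  finally show "Rep_nc (word_mon (u @ v)) w = Rep_nc (word_mon u * word_mon v) w"
    by (auto simp: Rep_word_mon)
qed

lemma word_mon_single: "word_mon [i] = X i"
  by (rule nc_eqI) (simp add: Rep_word_mon Rep_X pvar_def)

lemma word_mon_Cons: "word_mon (i # w) = X i * word_mon w"
  using word_mon_append[of "[i]" w] by (simp add: word_mon_single)

lemma Rep_X_mult: "Rep_nc (X i * p) w = (if w \<noteq> [] \<and> hd w = i then Rep_nc p (tl w) else 0)"
proof -
  have "Rep_nc (X i * p) w = (\<Sum>(u,v)\<in>splits w. (if u = [i] then 1 else 0) * Rep_nc p v)"
    by (simp add: Rep_times pmul_splits Rep_X pvar_def)
  also have "\<dots> = (\<Sum>uv\<in>splits w. if uv = ([i], tl w) then Rep_nc p (tl w) else 0)"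
    by (intro sum.cong) (auto simp: splits_def split: if_splits)
  also have "\<dots> = (if ([i], tl w) \<in> splits w then Rep_nc p (tl w) else 0)"
    by (rule sum.delta[OF finite_splits])
  also have "\<dots> = (if w \<noteq> [] \<and> hd w = i then Rep_nc p (tl w) else 0)"
    by (cases w) (auto simp: splits_def)
  finally show ?thesis .
qed

definition supp :: "'k::field nc \<Rightarrow> nat list set" where "supp p = {w. Rep_nc p w \<noteq> 0}"

definition finsupp :: "'k::field nc \<Rightarrow> bool" where "finsupp p \<longleftrightarrow> finite (supp p)"

lemma expand_superset:
  assumes "finite A" "supp p \<subseteq> A"
  shows "p = (\<Sum>w\<in>A. scalar (Rep_nc p w) * word_mon w)"
proof (rule nc_eqI)
  fix v
  have "(\<Sum>w\<in>A. Rep_nc (scalar (Rep_nc p w) * word_mon w) v) = (\<Sum>w\<in>A. if w = v then Rep_nc p v else 0)"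
    by (intro sum.cong) (auto simp: Rep_word_mon)
  also have "\<dots> = Rep_nc p v" using assms by (auto simp: supp_def)
  finally show "Rep_nc p v = Rep_nc (\<Sum>w\<in>A. scalar (Rep_nc p w) * word_mon w) v"
    by (simp add: Rep_sum)
qed

lemma expand: "finsupp p \<Longrightarrow> p = (\<Sum>w\<in>supp p. scalar (Rep_nc p w) * word_mon w)"
  using expand_superset finsupp_def by blast

lemma finsupp_0[simp]: "finsupp 0" by (simp add: finsupp_def supp_def)

lemma finsupp_add: "finsupp p \<Longrightarrow> finsupp q \<Longrightarrow> finsupp (p + q)"
  unfolding finsupp_def supp_def by (rule finite_subset[of _ "{w. Rep_nc p w \<noteq> 0} \<union> {w. Rep_nc q w \<noteq> 0}"]) auto

lemma finsupp_uminus: "finsupp p \<Longrightarrow> finsupp (- p)" unfolding finsupp_def supp_def by simp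

lemma finsupp_scalar_mult: "finsupp p \<Longrightarrow> finsupp (scalar c * p)"
  unfolding finsupp_def supp_def by (rule finite_subset[of _ "{w. Rep_nc p w \<noteq> 0}"]) auto

lemma finsupp_word_mon: "finsupp (word_mon w)"
  unfolding finsupp_def supp_def by (rule finite_subset[of _ "{w}"]) (auto simp: Rep_word_mon)

lemma finsupp_sum: "(\<And>x. x \<in> A \<Longrightarrow> finsupp (f x)) \<Longrightarrow> finsupp (sum f A)"
  by (induction A rule: infinite_finite_induct) (auto intro: finsupp_add)

lemma finsupp_scalar: "finsupp (scalar c)"
  using finsupp_scalar_mult[OF finsupp_word_mon, of c "[]"] by (simp add: word_mon_Nil)

lemma finsupp_1: "finsupp 1" using finsupp_word_mon[of "[]"] by (simp add: word_mon_Nil)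

lemma finsupp_X: "finsupp (X i)" using finsupp_word_mon[of "[i]"] by (simp add: word_mon_single)

lemma finsupp_mult: assumes "finsupp p" "finsupp q" shows "finsupp (p * q)"
proof -
  have "supp (p * q) \<subseteq> (\<lambda>(u,v). u @ v) ` (supp p \<times> supp q)"
  proof
    fix w assume "w \<in> supp (p * q)"
    then have "(\<Sum>(u,v)\<in>splits w. Rep_nc p u * Rep_nc q v) \<noteq> 0"
      by (simp add: supp_def Rep_times pmul_splits)
    then obtain u v where "(u,v) \<in> splits w" "Rep_nc p u * Rep_nc q v \<noteq> 0"
      by (metis (no_types, lifting) case_prod_conv sum.neutral surj_pair)
    then show "w \<in> (\<lambda>(u,v). u @ v) ` (supp p \<times> supp q)"
      by (auto simp: supp_def splits_def intro!: image_eqI[of _ _ "(u,v)"])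
  qed
  then show ?thesis using assms unfolding finsupp_def by (meson finite_SigmaI finite_imageI finite_subset)
qed

definition word_val :: "(nat \<Rightarrow> 'k::field nc) \<Rightarrow> nat list \<Rightarrow> 'k nc" where
  "word_val \<sigma> w = foldr (\<lambda>i acc. \<sigma> i * acc) w 1"

lemma word_val_Nil[simp]: "word_val \<sigma> [] = 1" by (simp add: word_val_def)

lemma word_val_Cons[simp]: "word_val \<sigma> (i # w) = \<sigma> i * word_val \<sigma> w" by (simp add: word_val_def)

lemma word_val_append: "word_val \<sigma> (u @ v) = word_val \<sigma> u * word_val \<sigma> v"
  by (induction u) (auto simp: mult.assoc)

lemma finsupp_word_val: "(\<And>i. i \<in> set w \<Longrightarrow> finsupp (\<sigma> i)) \<Longrightarrow> finsupp (word_val \<sigma> w)"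
  by (induction w) (auto intro: finsupp_mult finsupp_1)

lemma word_val_X: "word_val X w = word_mon w" by (induction w) (auto simp: word_mon_Nil word_mon_Cons)

definition psubst :: "(nat \<Rightarrow> 'k::field nc) \<Rightarrow> 'k nc \<Rightarrow> 'k nc" where
  "psubst \<sigma> p = (\<Sum>w\<in>supp p. scalar (Rep_nc p w) * word_val \<sigma> w)"

lemma eval_word_bridge: "eval_word \<sigma> w = Rep_nc (word_val (\<lambda>i. Abs_nc (\<sigma> i)) w)"
  by (induction w) (auto simp: eval_word_def Rep_times Abs_nc_inverse)

lemma subst_bridge: "subst \<sigma> p = Rep_nc (psubst (\<lambda>i. Abs_nc (\<sigma> i)) (Abs_nc p))"
  unfolding subst_def psubst_def
  by (auto simp: Rep_sum supp_def Abs_nc_inverse eval_word_bridge)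

lemma psubst_superset:
  assumes "finite A" "supp p \<subseteq> A"
  shows "psubst \<sigma> p = (\<Sum>w\<in>A. scalar (Rep_nc p w) * word_val \<sigma> w)"
  unfolding psubst_def using assms
  by (intro sum.mono_neutral_left) (auto simp: supp_def)

lemma psubst_add: assumes "finsupp p" "finsupp q"
  shows "psubst \<sigma> (p + q) = psubst \<sigma> p + psubst \<sigma> q"
proof -
  let ?A = "supp p \<union> supp q"
  have f: "finite ?A" using assms by (simp add: finsupp_def)
  have s: "supp (p+q) \<subseteq> ?A" by (auto simp: supp_def)
  have "psubst \<sigma> (p + q) = (\<Sum>w\<in>?A. scalar (Rep_nc (p+q) w) * word_val \<sigma> w)" by (rule psubst_superset[OF f s])
  also have "\<dots> = (\<Sum>w\<in>?A. scalar (Rep_nc p w) * word_val \<sigma> w + scalar (Rep_nc q w) * word_val \<sigma> w)"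
    by (intro sum.cong) (auto simp: scalar_add distrib_right)
  also have "\<dots> = (\<Sum>w\<in>?A. scalar (Rep_nc p w) * word_val \<sigma> w) + (\<Sum>w\<in>?A. scalar (Rep_nc q w) * word_val \<sigma> w)"
    by (rule sum.distrib)
  also have "\<dots> = psubst \<sigma> p + psubst \<sigma> q"
    using psubst_superset[OF f, of p] psubst_superset[OF f, of q] by (auto simp: supp_def)
  finally show ?thesis .
qed

lemma psubst_scalar_mult: "psubst \<sigma> (scalar c * p) = scalar c * psubst \<sigma> p"
proof (cases "finsupp p")
  case True
  have f: "finite (supp p)" using True by (simp add: finsupp_def)
  have s: "supp (scalar c * p) \<subseteq> supp p" by (auto simp: supp_def)
  have "psubst \<sigma> (scalar c * p) = (\<Sum>w\<in>supp p. scalar (Rep_nc (scalar c * p) w) * word_val \<sigma> w)"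
    by (rule psubst_superset[OF f s])
  also have "\<dots> = (\<Sum>w\<in>supp p. scalar c * (scalar (Rep_nc p w) * word_val \<sigma> w))"
    by (intro sum.cong) (auto simp: scalar_mult mult.assoc)
  also have "\<dots> = scalar c * psubst \<sigma> p" by (simp add: psubst_def sum_distrib_left)
  finally show ?thesis .
next
  case False
  show ?thesis
  proof (cases "c = 0")
    case True then show ?thesis by (simp add: psubst_def supp_def)
  next
    case False
    have "supp (scalar c * p) = supp p" using False by (auto simp: supp_def)
    then show ?thesis using \<open>\<not> finsupp p\<close> by (simp add: psubst_def finsupp_def)
  qed
qed

lemma psubst_0[simp]: "psubst \<sigma> 0 = 0" by (simp add: psubst_def supp_def)

lemma psubst_uminus: "psubst \<sigma> (- p) = - psubst \<sigma> p"
  using psubst_scalar_mult[of \<sigma> "-1" p] by (simp add: scalar_uminus)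

lemma psubst_diff: "finsupp p \<Longrightarrow> finsupp q \<Longrightarrow> psubst \<sigma> (p - q) = psubst \<sigma> p - psubst \<sigma> q"
  by (metis psubst_add[of p "-q"] finsupp_uminus psubst_uminus diff_conv_add_uminus)

lemma psubst_sum: "(\<And>x. x \<in> A \<Longrightarrow> finsupp (f x)) \<Longrightarrow> psubst \<sigma> (sum f A) = (\<Sum>x\<in>A. psubst \<sigma> (f x))"
proof (induction A rule: infinite_finite_induct)
  case (insert x F)
  then show ?case by (simp add: psubst_add finsupp_sum)
qed auto

lemma psubst_word_mon: "psubst \<sigma> (word_mon w) = word_val \<sigma> w"
proof -
  have "psubst \<sigma> (word_mon w) = (\<Sum>v\<in>{w}. scalar (Rep_nc (word_mon w) v) * word_val \<sigma> v)"
    by (rule psubst_superset) (auto simp: supp_def Rep_word_mon)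
  then show ?thesis by (simp add: Rep_word_mon)
qed

lemma psubst_1[simp]: "psubst \<sigma> 1 = 1" using psubst_word_mon[of \<sigma> "[]"] by (simp add: word_mon_Nil)

lemma psubst_X[simp]: "psubst \<sigma> (X i) = \<sigma> i"
  using psubst_word_mon[of \<sigma> "[i]"] by (simp add: word_mon_single)

lemma psubst_scalar[simp]: "psubst \<sigma> (scalar c) = scalar c" using psubst_scalar_mult[of \<sigma> c 1] by simp

lemma scalar_swap: "scalar a * m * (scalar b * n) = scalar (a*b) * (m*n)"
proof -
  have "m * (scalar b * n) = scalar b * (m * n)" by (metis mult.assoc scalar_comm)
  then show ?thesis by (simp add: scalar_mult mult.assoc)
qed

lemma sums_mult: "(\<Sum>u\<in>A. scalar (f u) * m u) * (\<Sum>v\<in>B. scalar (g v) * n v) = (\<Sum>u\<in>A. \<Sum>v\<in>B. scalar (f u * g v) * (m u * n v))"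
  by (simp add: sum_product scalar_swap)

lemma mult_expand:
  assumes "finsupp p" "finsupp q"
  shows "p * q = (\<Sum>u\<in>supp p. \<Sum>v\<in>supp q. scalar (Rep_nc p u * Rep_nc q v) * word_mon (u @ v))"
proof -
  have "p * q = (\<Sum>u\<in>supp p. scalar (Rep_nc p u) * word_mon u) * (\<Sum>v\<in>supp q. scalar (Rep_nc q v) * word_mon v)"
    using expand assms by metis
  then show ?thesis by (simp add: sums_mult word_mon_append)
qed

lemma psubst_mult: assumes "finsupp p" "finsupp q"
  shows "psubst \<sigma> (p * q) = psubst \<sigma> p * psubst \<sigma> q"
proof -
  have "psubst \<sigma> (p * q)
      = (\<Sum>u\<in>supp p. \<Sum>v\<in>supp q. psubst \<sigma> (scalar (Rep_nc p u * Rep_nc q v) * word_mon (u @ v)))"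
    unfolding mult_expand[OF assms] by (simp add: psubst_sum finsupp_sum finsupp_scalar_mult finsupp_word_mon)
  also have "\<dots> = (\<Sum>u\<in>supp p. \<Sum>v\<in>supp q. scalar (Rep_nc p u * Rep_nc q v) * (word_val \<sigma> u * word_val \<sigma> v))"
    by (simp add: psubst_scalar_mult psubst_word_mon word_val_append)
  also have "\<dots> = psubst \<sigma> p * psubst \<sigma> q"
    by (simp add: psubst_def sums_mult)
  finally show ?thesis .
qed

lemma psubst_power: "finsupp p \<Longrightarrow> psubst \<sigma> (p ^ n) = psubst \<sigma> p ^ n"
proof (induction n)
  case (Suc n)
  have "finsupp (p ^ n)" by (induction n) (auto intro: finsupp_mult finsupp_1 Suc.prems)
  then show ?case using Suc by (simp add: psubst_mult)
qed simp

definition fin_subst :: "(nat \<Rightarrow> 'k::field nc) \<Rightarrow> bool" where "fin_subst \<sigma> \<longleftrightarrow> (\<forall>i. finsupp (\<sigma> i))"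

lemma finsupp_psubst: "fin_subst \<sigma> \<Longrightarrow> finsupp (psubst \<sigma> p)"
  unfolding psubst_def fin_subst_def by (intro finsupp_sum finsupp_scalar_mult finsupp_word_val) auto

lemma psubst_word_val: assumes "fin_subst \<tau>"
  shows "psubst \<sigma> (word_val \<tau> w) = word_val (\<lambda>i. psubst \<sigma> (\<tau> i)) w"
proof (induction w)
  case Nil then show ?case by simp
next
  case (Cons i w)
  have "finsupp (\<tau> i)" using assms by (simp add: fin_subst_def)
  moreover have "finsupp (word_val \<tau> w)" using assms by (intro finsupp_word_val) (simp add: fin_subst_def)
  ultimately show ?case using Cons by (simp add: psubst_mult)
qed

lemma psubst_comp:
  assumes "fin_subst \<tau>" "finsupp p"
  shows "psubst \<sigma> (psubst \<tau> p) = psubst (\<lambda>i. psubst \<sigma> (\<tau> i)) p"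
proof -
  have "psubst \<sigma> (psubst \<tau> p) = (\<Sum>w\<in>supp p. psubst \<sigma> (scalar (Rep_nc p w) * word_val \<tau> w))"
    unfolding psubst_def[of \<tau>]
    by (rule psubst_sum) (metis assms(1) finsupp_word_val finsupp_scalar_mult fin_subst_def)
  also have "\<dots> = psubst (\<lambda>i. psubst \<sigma> (\<tau> i)) p"
    unfolding psubst_def[of "\<lambda>i. psubst \<sigma> (\<tau> i)"] using assms
    by (intro sum.cong) (auto simp: psubst_scalar_mult psubst_word_val)
  finally show ?thesis .
qed

lemma psubst_id: assumes "finsupp p" shows "psubst X p = p"
proof -
  have "psubst X p = (\<Sum>w\<in>supp p. scalar (Rep_nc p w) * word_mon w)" by (simp add: psubst_def word_val_X)
  also have "\<dots> = p" by (rule expand[OF assms, symmetric])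
  finally show ?thesis .
qed

definition poly_in :: "nat set \<Rightarrow> 'k::field nc \<Rightarrow> bool" where "poly_in V p \<longleftrightarrow> in_vars V (Rep_nc p)"

lemma poly_in_iff: "poly_in V p \<longleftrightarrow> finsupp p \<and> (\<forall>w\<in>supp p. set w \<subseteq> V)"
  by (auto simp: poly_in_def in_vars_def finsupp_def supp_def)

lemma poly_in_finsupp: "poly_in V p \<Longrightarrow> finsupp p" by (simp add: poly_in_iff)

lemma poly_in_0[simp]: "poly_in V 0" by (simp add: poly_in_iff supp_def)

lemma poly_in_support: "poly_in V p \<Longrightarrow> Rep_nc p w \<noteq> 0 \<Longrightarrow> set w \<subseteq> V"
  by (auto simp: poly_in_iff supp_def)

lemma poly_in_I: "finsupp p \<Longrightarrow> (\<And>w. Rep_nc p w \<noteq> 0 \<Longrightarrow> set w \<subseteq> V) \<Longrightarrow> poly_in V p"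
  by (auto simp: poly_in_iff supp_def)

lemma poly_in_add: assumes "poly_in V p" "poly_in V q" shows "poly_in V (p + q)"
proof (rule poly_in_I)
  show "finsupp (p + q)" using assms by (simp add: poly_in_finsupp finsupp_add)
  fix w assume "Rep_nc (p + q) w \<noteq> 0"
  then have "Rep_nc p w \<noteq> 0 \<or> Rep_nc q w \<noteq> 0" by auto
  then show "set w \<subseteq> V" using assms poly_in_support by blast
qed

lemma poly_in_uminus: "poly_in V p \<Longrightarrow> poly_in V (- p)"
  by (auto simp: poly_in_iff finsupp_uminus supp_def)

lemma poly_in_diff: "poly_in V p \<Longrightarrow> poly_in V q \<Longrightarrow> poly_in V (p - q)"
  by (metis diff_conv_add_uminus poly_in_add poly_in_uminus)

lemma poly_in_scalar_mult: "poly_in V p \<Longrightarrow> poly_in V (scalar c * p)"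
  by (auto simp: poly_in_iff finsupp_scalar_mult supp_def)

lemma poly_in_word_mon: "set w \<subseteq> V \<Longrightarrow> poly_in V (word_mon w)"
  by (auto simp: poly_in_iff finsupp_word_mon supp_def Rep_word_mon)

lemma poly_in_sum: "(\<And>x. x \<in> A \<Longrightarrow> poly_in V (f x)) \<Longrightarrow> poly_in V (sum f A)"
  by (induction A rule: infinite_finite_induct) (auto intro: poly_in_add)

lemma poly_in_scalar: "poly_in V (scalar c)"
  using poly_in_scalar_mult[OF poly_in_word_mon, of "[]" V c] by (simp add: word_mon_Nil)

lemma poly_in_1: "poly_in V 1" using poly_in_word_mon[of "[]" V] by (simp add: word_mon_Nil)

lemma poly_in_X: "i \<in> V \<Longrightarrow> poly_in V (X i)"
  using poly_in_word_mon[of "[i]" V] by (simp add: word_mon_single)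

lemma poly_in_mono: "poly_in V p \<Longrightarrow> V \<subseteq> W \<Longrightarrow> poly_in W p"
  by (auto simp: poly_in_iff)

lemma poly_in_mult: assumes "poly_in V p" "poly_in V q" shows "poly_in V (p * q)"
  unfolding mult_expand[OF assms[THEN poly_in_finsupp]] using assms
  by (intro poly_in_sum poly_in_scalar_mult poly_in_word_mon) (auto simp: poly_in_iff)

lemma poly_in_power: "poly_in V p \<Longrightarrow> poly_in V (p ^ n)"
  by (induction n) (auto intro: poly_in_mult poly_in_1)

lemma poly_in_word_val: "(\<And>i. i \<in> set w \<Longrightarrow> poly_in V (\<sigma> i)) \<Longrightarrow> poly_in V (word_val \<sigma> w)"
  by (induction w) (auto intro: poly_in_mult poly_in_1)

lemma poly_in_psubst: assumes "poly_in V p" "\<And>i. i \<in> V \<Longrightarrow> poly_in W (\<sigma> i)"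
  shows "poly_in W (psubst \<sigma> p)"
  unfolding psubst_def using assms
  by (intro poly_in_sum poly_in_scalar_mult poly_in_word_val) (auto simp: poly_in_iff)

lemma word_val_agree: "(\<And>i. i \<in> set w \<Longrightarrow> \<sigma> i = \<tau> i) \<Longrightarrow> word_val \<sigma> w = word_val \<tau> w"
  by (induction w) auto

lemma psubst_agree: assumes "poly_in V p" "\<And>i. i \<in> V \<Longrightarrow> \<sigma> i = \<tau> i"
  shows "psubst \<sigma> p = psubst \<tau> p"
  unfolding psubst_def using assms
  by (intro sum.cong refl arg_cong2[where f="(*)"] word_val_agree) (auto simp: poly_in_iff)

lemma psubst_id_on: assumes "poly_in V p" "\<And>i. i \<in> V \<Longrightarrow> \<sigma> i = X i"
  shows "psubst \<sigma> p = p"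
  using psubst_agree[OF assms] psubst_id[OF poly_in_finsupp[OF assms(1)]] by simp

lemma psubst_const: "poly_in {} p \<Longrightarrow> psubst \<sigma> p = p"
  by (rule psubst_id_on) auto


section \<open>The group U_3 as a group of triples\<close>

text \<open>A triple (a,b,c) of ring elements stands for the substitution x_1 \<mapsto> x_1+a, x_2 \<mapsto> x_2+b,
  x_3 \<mapsto> x_3+c; rep3 maps it to the coefficient-function representation used by U3.\<close>
type_synonym 'k trip = "'k nc \<times> 'k nc \<times> 'k nc"

definition rep3 :: "'k::field trip \<Rightarrow> 'k ncpoly \<times> 'k ncpoly \<times> 'k ncpoly" where
  "rep3 x = (case x of (a,b,c) \<Rightarrow> (Rep_nc a, Rep_nc b, Rep_nc c))"

lemma rep3_simp: "rep3 (a,b,c) = (Rep_nc a, Rep_nc b, Rep_nc c)" by (simp add: rep3_def)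

lemma rep3_inj: "rep3 x = rep3 y \<longleftrightarrow> x = y"
  by (cases x; cases y) (auto simp: rep3_simp Rep_nc_inject)

lemma rep3_surj: "\<exists>x. f = rep3 x"
  by (cases f) (metis rep3_simp Abs_nc_inverse UNIV_I)

definition aut_subst :: "'k::field trip \<Rightarrow> nat \<Rightarrow> 'k nc" where
  "aut_subst x i = (case x of (a,b,c) \<Rightarrow>
      if i = 1 then X 1 + a else if i = 2 then X 2 + b else if i = 3 then X 3 + c else X i)"

text \<open>The group law: (\<phi> \<circ> \<psi>)(x_i) = \<phi>(\<psi>(x_i)), i.e. the second triple is substituted by the first.\<close>
definition comp3 :: "'k::field trip \<Rightarrow> 'k trip \<Rightarrow> 'k trip" where
  "comp3 x y = (case y of (a,b,c) \<Rightarrow> (fst x + psubst (aut_subst x) a,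
       fst (snd x) + psubst (aut_subst x) b, snd (snd x) + psubst (aut_subst x) c))"

lemma comp3_simp: "comp3 (x1,x2,x3) (a,b,c) = (x1 + psubst (aut_subst (x1,x2,x3)) a,
       x2 + psubst (aut_subst (x1,x2,x3)) b, x3 + psubst (aut_subst (x1,x2,x3)) c)"
  by (simp add: comp3_def)

lemma tri_subst_bridge: "(\<lambda>i. Abs_nc (tri_subst (rep3 x) i)) = aut_subst x"
  by (cases x) (auto simp: rep3_simp tri_subst_def aut_subst_def fun_eq_iff Rep_plus[symmetric]
      Rep_X[symmetric] Rep_nc_inverse)

lemma U3_mult_rep3: "U3_mult (rep3 x) (rep3 y) = rep3 (comp3 x y)"
proof -
  obtain x1 x2 x3 where x: "x = (x1,x2,x3)" by (cases x)
  obtain y1 y2 y3 where y: "y = (y1,y2,y3)" by (cases y)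
  have "\<And>p. subst (tri_subst (rep3 x)) (Rep_nc p) = Rep_nc (psubst (aut_subst x) p)"
    by (simp add: subst_bridge tri_subst_bridge Rep_nc_inverse)
  then show ?thesis unfolding x y
    by (simp add: rep3_simp U3_mult_def comp3_simp Rep_plus)
qed

definition triples3 :: "'k::field trip set" where
  "triples3 = {(a,b,c). poly_in {2,3} a \<and> poly_in {3} b \<and> poly_in {} c}"

lemma U3_carrier: "carrier U3 = rep3 ` triples3"
proof -
  have "f \<in> rep3 ` triples3" if "f \<in> carrier U3" for f
  proof -
    obtain x where "f = rep3 x" using rep3_surj by blast
    then show ?thesis using that
      by (cases x) (auto simp: rep3_simp U3_def triples3_def poly_in_def intro!: image_eqI)
  qed
  moreover have "rep3 x \<in> carrier U3" if "x \<in> triples3" for x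
    using that by (cases x) (auto simp: rep3_simp U3_def triples3_def poly_in_def)
  ultimately show ?thesis by blast
qed

lemma triples3_ex: "f \<in> carrier U3 \<Longrightarrow> \<exists>x\<in>triples3. f = rep3 x"
  using U3_carrier by blast

lemma rep3_carrier: "x \<in> triples3 \<Longrightarrow> rep3 x \<in> carrier U3"
  by (simp add: U3_carrier)

lemma U3_one: "one U3 = rep3 (0,0,0)" by (simp add: U3_def Rep_zero rep3_simp)

lemma mult_U3_rep3: "rep3 x \<otimes>\<^bsub>U3\<^esub> rep3 y = rep3 (comp3 x y)"
  by (simp add: U3_def U3_mult_rep3)

lemma fin_subst_aut_subst: "x \<in> triples3 \<Longrightarrow> fin_subst (aut_subst x)"
  by (cases x) (auto simp: fin_subst_def aut_subst_def triples3_def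
      intro!: finsupp_add finsupp_X dest!: poly_in_finsupp)

lemma aut_subst_poly_in23: "x \<in> triples3 \<Longrightarrow> i \<in> {2,3} \<Longrightarrow> poly_in {2,3} (aut_subst x i)"
  by (cases x) (auto simp: aut_subst_def triples3_def intro!: poly_in_add poly_in_X elim: poly_in_mono)

lemma aut_subst_poly_in3: "x \<in> triples3 \<Longrightarrow> i \<in> {3} \<Longrightarrow> poly_in {3} (aut_subst x i)"
  by (cases x) (auto simp: aut_subst_def triples3_def intro!: poly_in_add poly_in_X elim: poly_in_mono)

lemma comp3_closed: assumes "x \<in> triples3" "y \<in> triples3" shows "comp3 x y \<in> triples3"
proof -
  obtain x1 x2 x3 where x: "x = (x1,x2,x3)" by (cases x)
  obtain y1 y2 y3 where y: "y = (y1,y2,y3)" by (cases y)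
  show ?thesis using assms aut_subst_poly_in23[OF assms(1)] aut_subst_poly_in3[OF assms(1)] unfolding x y
    by (auto simp: triples3_def comp3_simp psubst_const intro!: poly_in_add poly_in_psubst)
qed

lemma aut_subst_comp3: assumes "x \<in> triples3" "y \<in> triples3"
  shows "aut_subst (comp3 x y) = (\<lambda>i. psubst (aut_subst x) (aut_subst y i))"
proof -
  obtain x1 x2 x3 where x: "x = (x1,x2,x3)" by (cases x)
  obtain y1 y2 y3 where y: "y = (y1,y2,y3)" by (cases y)
  have f: "finsupp y1" "finsupp y2" "finsupp y3"
    using assms(2) by (auto simp: y triples3_def poly_in_finsupp)
  show ?thesis unfolding x y
    by (auto simp: fun_eq_iff comp3_simp aut_subst_def psubst_add f finsupp_X add.assoc)
qed

lemma comp3_assoc: assumes "x \<in> triples3" "y \<in> triples3" "z \<in> triples3"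
  shows "comp3 (comp3 x y) z = comp3 x (comp3 y z)"
proof -
  obtain x1 x2 x3 where x: "x = (x1,x2,x3)" by (cases x)
  obtain y1 y2 y3 where y: "y = (y1,y2,y3)" by (cases y)
  obtain z1 z2 z3 where z: "z = (z1,z2,z3)" by (cases z)
  have fy: "finsupp y1" "finsupp y2" "finsupp y3"
    using assms(2) by (auto simp: y triples3_def poly_in_finsupp)
  have fz: "finsupp z1" "finsupp z2" "finsupp z3"
    using assms(3) by (auto simp: z triples3_def poly_in_finsupp)
  have fyz: "finsupp (psubst (aut_subst y) z1)" "finsupp (psubst (aut_subst y) z2)"
      "finsupp (psubst (aut_subst y) z3)"
    using fin_subst_aut_subst[OF assms(2)] by (auto intro: finsupp_psubst)
  have comp: "psubst (aut_subst (comp3 x y)) p = psubst (aut_subst x) (psubst (aut_subst y) p)"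
    if "finsupp p" for p
    by (simp add: aut_subst_comp3[OF assms(1,2)] psubst_comp[OF fin_subst_aut_subst[OF assms(2)] that])
  show ?thesis
    using comp[OF fz(1)] comp[OF fz(2)] comp[OF fz(3)] fyz unfolding x y z
    by (simp add: comp3_simp psubst_add fy add.assoc)
qed

lemma aut_subst_0: "aut_subst (0,0,0) = X" by (auto simp: aut_subst_def fun_eq_iff)

lemma comp3_one_left: "x \<in> triples3 \<Longrightarrow> comp3 (0,0,0) x = x"
  by (cases x) (auto simp: comp3_simp aut_subst_0 psubst_id triples3_def poly_in_finsupp)

lemma comp3_one_right: "comp3 x (0,0,0) = x"
  by (cases x) (auto simp: comp3_simp)

text \<open>For x = (x1,x2,x3) the inverse of x_2 \<mapsto> x_2 + x2(x_3), x_3 \<mapsto> x_3 + x3 (x3 a constant) is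
  x_2 \<mapsto> x_2 - x2(x_3 - x3), x_3 \<mapsto> x_3 - x3, which is again of the form aut_subst.\<close>
definition inv_shift :: "'k::field trip \<Rightarrow> 'k trip" where
  "inv_shift x = (case x of (x1,x2,x3) \<Rightarrow> (0, - psubst (aut_subst (0,0,-x3)) x2, -x3))"

lemma inv_shift_triples3: assumes "x \<in> triples3" shows "inv_shift x \<in> triples3"
proof -
  obtain x1 x2 x3 where x: "x = (x1,x2,x3)" by (cases x)
  have a: "poly_in {3} x2" "poly_in {} x3" using assms by (auto simp: x triples3_def)
  have "poly_in {3} (aut_subst (0,0,-x3) i)" if "i \<in> {3}" for i
    using that a(2) by (auto simp: aut_subst_def intro!: poly_in_add poly_in_diff poly_in_X
        poly_in_uminus elim: poly_in_mono)
  then show ?thesis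
    using a by (auto simp: x inv_shift_def triples3_def intro!: poly_in_uminus poly_in_psubst)
qed

lemma aut_subst_inv_shift:
  assumes "x \<in> triples3" "i \<in> {2,3}"
  shows "psubst (aut_subst x) (aut_subst (inv_shift x) i) = X i"
proof -
  obtain x1 x2 x3 where x: "x = (x1,x2,x3)" by (cases x)
  have a: "poly_in {3} x2" "poly_in {} x3" using assms(1) by (auto simp: x triples3_def)
  have fx: "finsupp x2" "finsupp x3" using a poly_in_finsupp by auto
  have x3c: "\<And>\<sigma>. psubst \<sigma> x3 = x3" using a(2) psubst_const by blast
  have shift3: "psubst (aut_subst x) (aut_subst (0,0,-x3) i) = X i" if "i \<in> {3}" for i
    using that by (simp add: aut_subst_def x psubst_add finsupp_X finsupp_uminus fx psubst_uminus psubst_diff x3c)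
  have "(0,0,-x3) \<in> triples3" using a by (simp add: triples3_def poly_in_uminus)
  then have "psubst (aut_subst x) (psubst (aut_subst (0,0,-x3)) x2)
      = psubst (\<lambda>i. psubst (aut_subst x) (aut_subst (0,0,-x3) i)) x2"
    using psubst_comp fin_subst_aut_subst fx by blast
  also have "\<dots> = x2" by (rule psubst_id_on[OF a(1)]) (use shift3 in auto)
  finally have inv2: "psubst (aut_subst x) (psubst (aut_subst (0,0,-x3)) x2) = x2" .
  have fk: "finsupp (psubst (aut_subst (0,0,-x3)) x2)"
    using \<open>(0,0,-x3) \<in> triples3\<close> by (intro finsupp_psubst fin_subst_aut_subst)
  show ?thesis using assms(2)
    by (auto simp: inv_shift_def x aut_subst_def psubst_add psubst_diff psubst_uminus finsupp_X
        finsupp_uminus fx fk inv2[unfolded x] x3c)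
qed

lemma psubst_aut_subst_inv_shift:
  assumes "x \<in> triples3" "poly_in {2,3} p"
  shows "psubst (aut_subst x) (psubst (aut_subst (inv_shift x)) p) = p"
proof -
  have "psubst (aut_subst x) (psubst (aut_subst (inv_shift x)) p)
      = psubst (\<lambda>i. psubst (aut_subst x) (aut_subst (inv_shift x) i)) p"
    using psubst_comp fin_subst_aut_subst[OF inv_shift_triples3[OF assms(1)]]
      poly_in_finsupp[OF assms(2)] by blast
  also have "\<dots> = p"
    by (rule psubst_id_on[OF assms(2)]) (use aut_subst_inv_shift[OF assms(1)] in auto)
  finally show ?thesis .
qed

definition inv3 :: "'k::field trip \<Rightarrow> 'k trip" where
  "inv3 x = (case x of (x1,x2,x3) \<Rightarrow> (- psubst (aut_subst (inv_shift x)) x1,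
       - psubst (aut_subst (inv_shift x)) x2, - psubst (aut_subst (inv_shift x)) x3))"

lemma inv3_triples3: assumes "x \<in> triples3" shows "inv3 x \<in> triples3"
proof -
  obtain x1 x2 x3 where x: "x = (x1,x2,x3)" by (cases x)
  have s: "inv_shift x \<in> triples3" using assms by (rule inv_shift_triples3)
  show ?thesis
    using assms aut_subst_poly_in23[OF s] aut_subst_poly_in3[OF s]
    by (auto simp: inv3_def x triples3_def psubst_const intro!: poly_in_uminus poly_in_psubst)
qed

lemma comp3_inv3: assumes "x \<in> triples3" shows "comp3 x (inv3 x) = (0,0,0)"
proof -
  obtain x1 x2 x3 where x: "x = (x1,x2,x3)" by (cases x)
  have "poly_in {2,3} x1" "poly_in {2,3} x2" "poly_in {2,3} x3"
    using assms by (auto simp: x triples3_def elim: poly_in_mono)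
  then show ?thesis
    using psubst_aut_subst_inv_shift[OF assms] unfolding x
    by (simp add: inv3_def comp3_simp psubst_uminus)
qed

lemma U3_monoid: "monoid (U3 :: ('k::field ncpoly \<times> 'k ncpoly \<times> 'k ncpoly) monoid)"
proof
  fix f g h :: "'k ncpoly \<times> 'k ncpoly \<times> 'k ncpoly"
  assume f: "f \<in> carrier U3" and g: "g \<in> carrier U3"
  obtain x where x: "x \<in> triples3" "f = rep3 x" using triples3_ex[OF f] by blast
  obtain y where y: "y \<in> triples3" "g = rep3 y" using triples3_ex[OF g] by blast
  show "f \<otimes>\<^bsub>U3\<^esub> g \<in> carrier U3"
    using x y by (simp add: mult_U3_rep3 rep3_carrier comp3_closed)
  assume h: "h \<in> carrier U3"
  obtain z where z: "z \<in> triples3" "h = rep3 z" using triples3_ex[OF h] by blast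
  show "f \<otimes>\<^bsub>U3\<^esub> g \<otimes>\<^bsub>U3\<^esub> h = f \<otimes>\<^bsub>U3\<^esub> (g \<otimes>\<^bsub>U3\<^esub> h)"
    using x y z by (simp add: mult_U3_rep3 comp3_assoc)
next
  show "\<one>\<^bsub>U3\<^esub> \<in> carrier U3" by (simp add: U3_one rep3_carrier triples3_def)
next
  fix f :: "'k ncpoly \<times> 'k ncpoly \<times> 'k ncpoly"
  assume f: "f \<in> carrier U3"
  obtain x where x: "x \<in> triples3" "f = rep3 x" using triples3_ex[OF f] by blast
  show "\<one>\<^bsub>U3\<^esub> \<otimes>\<^bsub>U3\<^esub> f = f" "f \<otimes>\<^bsub>U3\<^esub> \<one>\<^bsub>U3\<^esub> = f"
    using x by (simp_all add: U3_one mult_U3_rep3 comp3_one_left comp3_one_right)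
qed

lemma U3_group: "group (U3 :: ('k::field ncpoly \<times> 'k ncpoly \<times> 'k ncpoly) monoid)"
proof (rule monoid.group_r_invI[OF U3_monoid])
  fix f :: "'k ncpoly \<times> 'k ncpoly \<times> 'k ncpoly" assume f: "f \<in> carrier U3"
  obtain x where x: "x \<in> triples3" "f = rep3 x" using triples3_ex[OF f] by blast
  show "\<exists>g\<in>carrier U3. f \<otimes>\<^bsub>U3\<^esub> g = \<one>\<^bsub>U3\<^esub>"
    using x by (intro bexI[of _ "rep3 (inv3 x)"])
      (simp_all add: mult_U3_rep3 U3_one comp3_inv3 rep3_carrier inv3_triples3)
qed

lemma U3_inv_rep3:
  fixes x :: "'k::field trip"
  assumes "x \<in> triples3" "y \<in> triples3" "comp3 x y = (0,0,0)"
  shows "inv\<^bsub>U3\<^esub> (rep3 x) = rep3 y"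
proof -
  interpret group "U3 :: ('k ncpoly \<times> 'k ncpoly \<times> 'k ncpoly) monoid" by (rule U3_group)
  have "rep3 x \<otimes>\<^bsub>U3\<^esub> rep3 y = \<one>\<^bsub>U3\<^esub>" using assms(3) by (simp add: mult_U3_rep3 U3_one)
  then have "rep3 y \<otimes>\<^bsub>U3\<^esub> rep3 x = \<one>\<^bsub>U3\<^esub>" using inv_comm rep3_carrier assms by blast
  then show ?thesis using inv_equality rep3_carrier assms by blast
qed

section \<open>Univariate polynomials as polynomials in x_3\<close>

definition emb3 :: "'k::field poly \<Rightarrow> 'k nc" where
  "emb3 q = Abs_nc (\<lambda>w. if w = replicate (length w) 3 then coeff q (length w) else 0)"

lemma Rep_emb3: "Rep_nc (emb3 q) w = (if w = replicate (length w) 3 then coeff q (length w) else 0)"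
  by (simp add: emb3_def Abs_nc_inverse)

lemma Rep_emb3_rep: "Rep_nc (emb3 q) (replicate n 3) = coeff q n"
  by (simp add: Rep_emb3)

lemma emb3_inj: "emb3 p = emb3 q \<Longrightarrow> p = q"
  by (metis Rep_emb3_rep poly_eqI)

lemma emb3_add: "emb3 (p + q) = emb3 p + emb3 q" by (rule nc_eqI) (simp add: Rep_emb3)
lemma emb3_diff: "emb3 (p - q) = emb3 p - emb3 q" by (rule nc_eqI) (simp add: Rep_emb3)
lemma emb3_smult: "emb3 (smult c p) = scalar c * emb3 p" by (rule nc_eqI) (simp add: Rep_emb3)
lemma emb3_0[simp]: "emb3 0 = 0" by (rule nc_eqI) (simp add: Rep_emb3)
lemma emb3_const: "emb3 [:c:] = scalar c"
  by (rule nc_eqI) (auto simp: Rep_emb3 Rep_scalar pconst_def coeff_pCons split: nat.splits)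
lemma emb3_pCons0: "emb3 (pCons 0 q) = X 3 * emb3 q"
proof (rule nc_eqI)
  fix w
  show "Rep_nc (emb3 (pCons 0 q)) w = Rep_nc (X 3 * emb3 q) w"
  proof (cases w)
    case Nil then show ?thesis by (simp add: Rep_X_mult Rep_emb3)
  next
    case (Cons i v) then show ?thesis by (auto simp: Rep_X_mult Rep_emb3)
  qed
qed

lemma emb3_pCons: "emb3 (pCons a q) = scalar a + X 3 * emb3 q"
proof -
  have e: "pCons a q = [:a:] + pCons 0 q" by simp
  show ?thesis by (metis e emb3_add emb3_const emb3_pCons0)
qed

lemma emb3_mult: "emb3 (p * q) = emb3 p * emb3 q"
proof (induction p)
  case 0 then show ?case by simp
next
  case (pCons a p)
  show ?case by (simp add: emb3_add emb3_smult emb3_pCons0 emb3_pCons pCons.IH distrib_right mult.assoc)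
qed

lemma emb3_comm: "emb3 p * emb3 q = emb3 q * emb3 p"
  by (metis emb3_mult mult.commute)

lemma poly_in_emb3: "poly_in {3} (emb3 q)"
proof (rule poly_in_I)
  have "supp (emb3 q) \<subseteq> (\<lambda>n. replicate n 3) ` {..degree q}"
    by (auto simp: supp_def Rep_emb3 le_degree intro!: image_eqI)
  then show "finsupp (emb3 q)" unfolding finsupp_def by (rule finite_subset) simp
next
  fix w assume "Rep_nc (emb3 q) w \<noteq> 0"
  then have "w = replicate (length w) 3" by (simp add: Rep_emb3 split: if_splits)
  then have "\<forall>x\<in>set w. x = 3" by (metis in_set_replicate)
  then show "set w \<subseteq> {3}" by auto
qed

lemma poly_in3_emb3: assumes "poly_in {3} p" shows "\<exists>q. p = emb3 q"
proof -
  have f: "finite (supp p)" using assms by (simp add: poly_in_iff finsupp_def)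
  define N where "N = Max (length ` supp p)"
  define q where "q = Abs_poly (\<lambda>n. Rep_nc p (replicate n 3))"
  have big: "Rep_nc p (replicate i 3) = 0" if "i > N" for i
  proof (rule ccontr)
    assume "Rep_nc p (replicate i 3) \<noteq> 0"
    then have "replicate i 3 \<in> supp p" by (simp add: supp_def)
    then have "i \<le> N" unfolding N_def using f by (metis Max_ge finite_imageI image_eqI length_replicate)
    then show False using that by simp
  qed
  have cq: "coeff q = (\<lambda>n. Rep_nc p (replicate n 3))" unfolding q_def by (rule coeff_Abs_poly) (use big in auto)
  have "p = emb3 q"
  proof (rule nc_eqI)
    fix w show "Rep_nc p w = Rep_nc (emb3 q) w"
    proof (cases "Rep_nc p w = 0")
      case False
      then have "set w \<subseteq> {3}" using assms poly_in_support by blast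
      then have "\<forall>y\<in>set w. y = 3" by auto
      then have "w = replicate (length w) 3" by (metis replicate_length_same)
      then show ?thesis by (metis Rep_emb3_rep cq)
    next
      case True
      then show ?thesis by (auto simp: Rep_emb3 cq)
    qed
  qed
  then show ?thesis by blast
qed

lemma psubst_emb3: assumes "\<sigma> 3 = X 3 + scalar h"
  shows "psubst \<sigma> (emb3 q) = emb3 (pcompose q [:h, 1:])"
proof (induction q)
  case 0 then show ?case by simp
next
  case (pCons a q)
  have "psubst \<sigma> (emb3 (pCons a q)) = scalar a + (X 3 + scalar h) * emb3 (pcompose q [:h, 1:])"
    by (simp add: emb3_pCons psubst_add finsupp_scalar finsupp_mult finsupp_X poly_in_finsupp[OF poly_in_emb3] psubst_mult pCons.IH assms)
  also have "\<dots> = emb3 (pcompose (pCons a q) [:h, 1:])"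
    by (simp add: pcompose_pCons emb3_add emb3_mult emb3_const emb3_pCons emb3_smult distrib_right add.commute)
  finally show ?case .
qed

lemma shift_invariant_const:
  fixes p :: "'k::field_char_0 nc"
  assumes p: "poly_in {3} p" and \<sigma>: "\<sigma> 3 = X 3 + scalar 1" and inv: "psubst \<sigma> p = p"
  shows "\<exists>c. p = scalar c"
proof -
  obtain q where q: "p = emb3 q" using poly_in3_emb3[OF p] by blast
  have "emb3 (pcompose q [:1, 1:]) = emb3 q" using psubst_emb3[of \<sigma> 1, OF \<sigma>] inv q by simp
  then have "fdiff q = 0" by (simp add: fdiff_def emb3_inj)
  then have "q = [:coeff q 0:]" by (rule fdiff_zero_const)
  then show ?thesis using q emb3_const by metis
qed

lemma S_idx_simps:
  "S_idx (Fin 0) = {pzero}"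
  "S_idx (Fin (Suc n)) = S_step (S_idx (Fin n))"
  "S_idx (OmegaPlus 0) = (\<Union>n. S_idx (Fin n))"
  "S_idx (OmegaPlus (Suc m)) = S_step (S_idx (OmegaPlus m))"
  "S_idx TwoOmega = (\<Union>m. S_idx (OmegaPlus m))"
  by (simp_all add: S_idx_def)

definition vsubst :: "'k::field nc \<Rightarrow> 'k nc \<Rightarrow> nat \<Rightarrow> 'k nc" where
  "vsubst G H i = (if i = 2 then X 2 + G else if i = 3 then X 3 + H else X i)"

lemma Vact_bridge: "Vact (Rep_nc a) (Rep_nc G, Rep_nc H) = Rep_nc (psubst (vsubst G H) a)"
proof -
  have "(\<lambda>i. Abs_nc (V_subst (Rep_nc G, Rep_nc H) i)) = vsubst G H"
    by (auto simp: fun_eq_iff V_subst_def vsubst_def Rep_plus[symmetric] Rep_X[symmetric] Rep_nc_inverse)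
  then show ?thesis by (simp add: Vact_def subst_bridge Rep_nc_inverse)
qed

lemma Vset_iff: "(Rep_nc G, Rep_nc H) \<in> Vset \<longleftrightarrow> poly_in {3} G \<and> poly_in {} H"
  by (simp add: Vset_def poly_in_def)

lemma S_step_diff:
  assumes "Rep_nc p \<in> S_step Y" "poly_in {3} G" "poly_in {} H"
  shows "Rep_nc (psubst (vsubst G H) p - p) \<in> Y"
proof -
  have "(Rep_nc G, Rep_nc H) \<in> Vset" using assms by (simp add: Vset_iff)
  then have "psub (Vact (Rep_nc p) (Rep_nc G, Rep_nc H)) (Rep_nc p) \<in> Y"
    using assms(1) by (simp add: S_step_def)
  then show ?thesis by (simp add: Vact_bridge Rep_minus)
qed

lemma S_step_mono: "mono S_step"
  unfolding S_step_def by (rule monoI) blast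

lemma pzero_S_step: assumes "pzero \<in> A" shows "pzero \<in> S_step A"
proof -
  have "psub (Vact pzero \<phi>) pzero = pzero" for \<phi> :: "'a ncpoly \<times> 'a ncpoly"
    using Vact_bridge[of 0 "Abs_nc (fst \<phi>)" "Abs_nc (snd \<phi>)"]
    by (simp add: Rep_zero Abs_nc_inverse psub_def pzero_def)
  then show ?thesis using assms by (simp add: S_step_def in_vars_def pzero_def)
qed

lemma S_idx_subset_step: "S_idx \<alpha> \<subseteq> S_step (S_idx \<alpha>)"
  unfolding S_idx_def by (rule stage_subset_step[OF S_step_mono]) (simp add: pzero_S_step)

section \<open>Quadratic polynomials in x_2 escape S_{2\<omega>}\<close>

lemma vsubst_shift3: "vsubst 0 1 3 = X 3 + scalar 1" by (simp add: vsubst_def)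

lemma vsubst_shift3_emb3: "psubst (vsubst 0 1) (emb3 q) - emb3 q = emb3 (fdiff q)"
  by (simp add: psubst_emb3[of "vsubst 0 1" 1, OF vsubst_shift3] fdiff_def emb3_diff)

lemma S_step_diff_shift3: "Rep_nc p \<in> S_step Y \<Longrightarrow> Rep_nc (psubst (vsubst 0 1) p - p) \<in> Y"
  by (rule S_step_diff) (simp_all add: poly_in_1)

text \<open>A nonzero q(x_3) is not in S_{deg q}: each S_step costs one degree of the difference.\<close>
lemma emb3_not_in_S_degree:
  "(q::'k::field_char_0 poly) \<noteq> 0 \<Longrightarrow> Rep_nc (emb3 q) \<notin> S_idx (Fin (degree q))"
proof (induction "degree q" arbitrary: q)
  case 0
  have "emb3 q \<noteq> 0" using 0 emb3_inj[of q 0] by auto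
  then show ?case using 0 by (simp add: S_idx_simps Rep_eq_pzero)
next
  case (Suc d)
  show ?case
  proof
    assume "Rep_nc (emb3 q) \<in> S_idx (Fin (degree q))"
    then have "Rep_nc (emb3 (fdiff q)) \<in> S_idx (Fin d)"
      using S_step_diff_shift3 vsubst_shift3_emb3 by (metis Suc.hyps(2) S_idx_simps(2))
    moreover have "fdiff q \<noteq> 0" "degree (fdiff q) = d" using fdiff_degree Suc.hyps(2) by metis+
    ultimately show False using Suc.hyps(1) by metis
  qed
qed

lemma S_idx_Fin_mono: "m \<le> n \<Longrightarrow> S_idx (Fin m) \<subseteq> S_idx (Fin n)"
  by (rule lift_Suc_mono_le[of "\<lambda>n. S_idx (Fin n)"]) (use S_idx_subset_step in \<open>simp_all add: S_idx_simps\<close>)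

text \<open>If P + Q = pq(x_3) \<noteq> 0 then x_2 P + Q x_2 + R (P, Q, R \<in> K[x_3]) is not in S_\<omega>: were it in
  S_n, the element x_2 \<mapsto> x_2 + x_3^n of V would put (P + Q) x_3^n, of degree \<ge> n, into S_n.\<close>
lemma linear_not_in_S_omega:
  fixes P Q R :: "'k::field_char_0 nc"
  assumes P: "poly_in {3} P" and Q: "poly_in {3} Q" and R: "poly_in {3} R"
    and pq: "P + Q = emb3 pq" "pq \<noteq> 0"
  shows "Rep_nc (X 2 * P + Q * X 2 + R) \<notin> S_idx (OmegaPlus 0)"
proof
  let ?F = "X 2 * P + Q * X 2 + R"
  assume "Rep_nc ?F \<in> S_idx (OmegaPlus 0)"
  then obtain n where "Rep_nc ?F \<in> S_idx (Fin n)" by (auto simp: S_idx_simps)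
  then have F: "Rep_nc ?F \<in> S_step (S_idx (Fin n))" using S_idx_subset_step by blast
  define G :: "'k nc" where "G = emb3 (monom 1 n)"
  have G: "poly_in {3} G" by (simp add: G_def poly_in_emb3)
  have fP: "finsupp P" "finsupp Q" "finsupp R" using P Q R poly_in_finsupp by auto
  have fixed: "psubst (vsubst G 0) T = T" if "poly_in {3} T" for T
    by (rule psubst_id_on[OF that]) (simp add: vsubst_def)
  have "psubst (vsubst G 0) ?F = (X 2 + G) * P + Q * (X 2 + G) + R"
    by (simp add: psubst_add psubst_mult finsupp_add finsupp_mult finsupp_X fP fixed P Q R)
      (simp add: vsubst_def)
  then have "psubst (vsubst G 0) ?F - ?F = G * P + Q * G" by (simp add: algebra_simps)
  also have "G * P = P * G" using poly_in3_emb3[OF P] G_def emb3_comm by metis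
  also have "P * G + Q * G = emb3 (pq * monom 1 n)"
    by (simp add: pq(1)[symmetric] emb3_mult G_def distrib_right)
  finally have "Rep_nc (emb3 (pq * monom 1 n)) \<in> S_idx (Fin n)"
    using S_step_diff[OF F G poly_in_0] by simp
  moreover have "pq * monom 1 n \<noteq> 0" using pq(2) by simp
  moreover have "n \<le> degree (pq * monom 1 n)"
    using pq(2) by (simp add: degree_mult_eq degree_monom_eq)
  ultimately show False using emb3_not_in_S_degree S_idx_Fin_mono by blast
qed

text \<open>The same element is not even in S_{\<omega>+deg pq}: the shift x_3 \<mapsto> x_3 + 1 keeps its shape
  and lowers the degree of P + Q.\<close>
lemma linear_not_in_S_omega_plus:
  fixes P Q R :: "'k::field_char_0 nc"
  assumes "poly_in {3} P" "poly_in {3} Q" "poly_in {3} R" "P + Q = emb3 pq" "pq \<noteq> 0"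
  shows "Rep_nc (X 2 * P + Q * X 2 + R) \<notin> S_idx (OmegaPlus (degree pq))"
  using assms
proof (induction "degree pq" arbitrary: pq P Q R)
  case 0
  then show ?case using linear_not_in_S_omega by metis
next
  case (Suc d)
  let ?F = "X 2 * P + Q * X 2 + R"
  let ?\<sigma> = "vsubst 0 1 :: nat \<Rightarrow> 'k nc"
  let ?D = "\<lambda>T. psubst ?\<sigma> T - T"
  show ?case
  proof
    assume "Rep_nc ?F \<in> S_idx (OmegaPlus (degree pq))"
    then have m: "Rep_nc (?D ?F) \<in> S_idx (OmegaPlus d)"
      using S_step_diff_shift3 by (metis Suc.hyps(2) S_idx_simps(4))
    have fP: "finsupp P" "finsupp Q" "finsupp R" using Suc.prems poly_in_finsupp by auto
    have "?\<sigma> 2 = X 2" by (simp add: vsubst_def)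
    then have dF: "?D ?F = X 2 * ?D P + ?D Q * X 2 + ?D R"
      by (simp add: psubst_add psubst_mult finsupp_add finsupp_mult finsupp_X fP algebra_simps)
    have D3: "poly_in {3} (?D T)" if "poly_in {3} T" for T
      by (rule poly_in_diff[OF poly_in_psubst[OF that] that]) (simp add: vsubst_def poly_in_add poly_in_X poly_in_1)
    have "?D P + ?D Q = ?D (P + Q)" by (simp add: psubst_add fP algebra_simps)
    also have "\<dots> = emb3 (fdiff pq)" using Suc.prems(4) by (simp add: vsubst_shift3_emb3)
    finally have e: "?D P + ?D Q = emb3 (fdiff pq)" .
    have "fdiff pq \<noteq> 0" "degree (fdiff pq) = d" using fdiff_degree Suc.hyps(2) by metis+
    then show False
      using Suc.hyps(1)[OF _ D3[OF Suc.prems(1)] D3[OF Suc.prems(2)] D3[OF Suc.prems(3)] e] m dF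
      by auto
  qed
qed

text \<open>a x_2^2 + x_2 P + Q x_2 + R with a \<noteq> 0 and P, Q, R \<in> K[x_3] is not in S_{2\<omega>}: were it in
  S_{\<omega>+m}, the element x_2 \<mapsto> x_2 + x_3^m would put a linear element with P + Q = 2a x_3^m there.\<close>
lemma quadratic_not_in_S_two_omega:
  fixes P Q R :: "'k::field_char_0 nc"
  assumes a: "a \<noteq> 0" and P: "poly_in {3} P" and Q: "poly_in {3} Q" and R: "poly_in {3} R"
  shows "Rep_nc (scalar a * (X 2 * X 2) + X 2 * P + Q * X 2 + R) \<notin> S_idx TwoOmega"
proof
  let ?F = "scalar a * (X 2 * X 2) + X 2 * P + Q * X 2 + R"
  assume "Rep_nc ?F \<in> S_idx TwoOmega"
  then obtain m where "Rep_nc ?F \<in> S_idx (OmegaPlus m)" by (auto simp: S_idx_simps)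
  then have F: "Rep_nc ?F \<in> S_step (S_idx (OmegaPlus m))" using S_idx_subset_step by blast
  define G :: "'k nc" where "G = emb3 (monom 1 m)"
  have G: "poly_in {3} G" by (simp add: G_def poly_in_emb3)
  have fP: "finsupp P" "finsupp Q" "finsupp R" using P Q R poly_in_finsupp by auto
  have fixed: "psubst (vsubst G 0) T = T" if "poly_in {3} T" for T
    by (rule psubst_id_on[OF that]) (simp add: vsubst_def)
  have "vsubst G 0 2 = X 2 + G" by (simp add: vsubst_def)
  then have "psubst (vsubst G 0) ?F = scalar a * ((X 2 + G) * (X 2 + G)) + (X 2 + G) * P + Q * (X 2 + G) + R"
    by (simp add: psubst_add psubst_mult psubst_scalar_mult finsupp_add finsupp_mult finsupp_X
        finsupp_scalar_mult fP fixed P Q R)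
  then have "psubst (vsubst G 0) ?F - ?F
      = scalar a * (X 2 * G) + scalar a * (G * X 2) + (scalar a * (G * G) + G * P + Q * G)"
    by (simp add: algebra_simps)
  also have "scalar a * (X 2 * G) = X 2 * (scalar a * G)" by (metis mult.assoc scalar_comm)
  also have "scalar a * (G * X 2) = (scalar a * G) * X 2" by (simp add: mult.assoc)
  finally have e: "psubst (vsubst G 0) ?F - ?F
      = X 2 * (scalar a * G) + (scalar a * G) * X 2 + (scalar a * (G * G) + G * P + Q * G)" .
  have i1: "poly_in {3} (scalar a * G)" using G by (rule poly_in_scalar_mult)
  have i2: "poly_in {3} (scalar a * (G * G) + G * P + Q * G)"
    using G P Q by (intro poly_in_add poly_in_scalar_mult poly_in_mult)
  have pq: "scalar a * G + scalar a * G = emb3 (smult (a + a) (monom 1 m))"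
    by (simp only: G_def emb3_smult scalar_add distrib_right)
  have nz: "smult (a + a) (monom (1::'k) m) \<noteq> 0" using a by (simp add: smult_eq_0_iff)
  have dg: "degree (smult (a + a) (monom (1::'k) m)) = m" using nz by (simp add: degree_monom_eq)
  show False using linear_not_in_S_omega_plus[OF i1 i1 i2 pq nz] S_step_diff[OF F G poly_in_0] e dg by simp
qed

lemma commuting_cube_diff:
  fixes x s :: "'a::ring_1"
  assumes xs: "x * s = s * x"
  shows "x ^ 3 - (x - s) ^ 3
    = (s*(x*x) + s*(x*x) + s*(x*x)) - (s*(s*x) + s*(s*x) + s*(s*x)) + s*(s*s)"
proof -
  have "x * (x * s) = s * (x * x)" "x * (s * x) = s * (x * x)" "x * (s * s) = s * (s * x)"
    "s * (x * s) = s * (s * x)"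
    by (metis xs mult.assoc)+
  with xs show ?thesis by (simp add: power3_eq_cube algebra_simps)
qed

lemma cube_diff_X2:
  fixes c :: "'k::field"
  shows "X 2 ^ 3 - (X 2 - scalar c) ^ 3
    = scalar (3*c) * (X 2 * X 2) + X 2 * scalar (-(3*c*c)) + 0 * X 2 + (scalar (c*c*c) :: 'k nc)"
proof -
  let ?x = "X 2 :: 'k nc" and ?s = "scalar c :: 'k nc"
  have xs: "?x * ?s = ?s * ?x" by (rule scalar_comm[symmetric])
  have s3: "scalar (3*c) = ?s + ?s + ?s" by (simp add: scalar_add[symmetric] algebra_simps)
  have "-(3*c*c) = -(c*c + c*c + c*c)" by (simp add: algebra_simps)
  then have e: "scalar (-(3*c*c)) = - (?s*?s + ?s*?s + ?s*?s)"
    by (simp only: scalar_uminus scalar_add scalar_mult)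
  have d: "?x*(?s*?s) = ?s*(?s*?x)" by (metis xs mult.assoc)
  have s33: "X 2 * scalar (-(3*c*c)) = - (?s*(?s*?x) + ?s*(?s*?x) + ?s*(?s*?x))"
    unfolding e by (simp add: algebra_simps d)
  have sss: "scalar (c*c*c) = ?s * (?s * ?s)" by (simp add: scalar_mult mult.assoc)
  show ?thesis unfolding commuting_cube_diff[OF xs] s3 s33 sss by (simp add: algebra_simps)
qed

lemma cube_difference_not_in_S_two_omega:
  "(c::'k::field_char_0) \<noteq> 0 \<Longrightarrow> Rep_nc (X 2 ^ 3 - (X 2 - scalar c) ^ 3) \<notin> S_idx TwoOmega"
  unfolding cube_diff_X2 by (rule quadratic_not_in_S_two_omega) (simp_all add: poly_in_scalar)

section \<open>Commutators with elements x_1 \<mapsto> x_1 + f_1\<close>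

definition shifts1 :: "'k::field ncpoly set \<Rightarrow> ('k ncpoly \<times> 'k ncpoly \<times> 'k ncpoly) set" where
  "shifts1 A = {(f1, pzero, pzero) | f1. f1 \<in> A}"

lemma shifts1_rep3: "rep3 (a,0,0) \<in> shifts1 A \<longleftrightarrow> Rep_nc a \<in> A"
  by (auto simp: shifts1_def Rep_zero rep3_simp)

lemma shifts1_elem:
  assumes "f \<in> shifts1 A" "f \<in> carrier U3"
  shows "\<exists>a. poly_in {2,3} a \<and> f = rep3 (a,0,0)"
proof -
  obtain x where x: "x \<in> triples3" "f = rep3 x" using triples3_ex[OF assms(2)] by blast
  obtain x1 x2 x3 where xx: "x = (x1,x2,x3)" by (cases x)
  have "Rep_nc x2 = pzero" "Rep_nc x3 = pzero"
    using assms(1) x xx by (auto simp: shifts1_def rep3_simp)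
  then have "x2 = 0" "x3 = 0" by (simp_all add: Rep_eq_pzero)
  then show ?thesis using x xx by (auto simp: triples3_def)
qed

lemma shifts1_triples3: "poly_in {2,3} a \<Longrightarrow> (a,0,0) \<in> triples3" by (simp add: triples3_def)

lemma comp3_shift1_left: assumes "poly_in {2,3} a" "y \<in> triples3"
  shows "comp3 (a,0,0) y = (a + fst y, fst (snd y), snd (snd y))"
proof -
  obtain y1 y2 y3 where y: "y = (y1,y2,y3)" by (cases y)
  have "poly_in {2,3} y1" "poly_in {2,3} y2" "poly_in {2,3} y3"
    using assms(2) by (auto simp: y triples3_def elim: poly_in_mono)
  moreover have "psubst (aut_subst (a,0,0)) p = p" if "poly_in {2,3} p" for p
    by (rule psubst_id_on[OF that]) (auto simp: aut_subst_def)
  ultimately show ?thesis by (simp add: y comp3_simp)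
qed

lemma comp3_shift1_right: "comp3 y (a,0,0) = (fst y + psubst (aut_subst y) a, fst (snd y), snd (snd y))"
  by (cases y) (simp add: comp3_simp)

lemma commutator_shift1:
  fixes a :: "'k::field nc"
  assumes a: "poly_in {2,3} a" and m: "m \<in> triples3"
  shows "commutator U3 (rep3 (a,0,0)) (inv\<^bsub>U3\<^esub> (rep3 m)) = rep3 (psubst (aut_subst m) a - a, 0, 0)"
proof -
  interpret group "U3 :: ('k ncpoly \<times> 'k ncpoly \<times> 'k ncpoly) monoid" by (rule U3_group)
  define d where "d = psubst (aut_subst m) a - a"
  obtain m1 m2 m3 where mm: "m = (m1,m2,m3)" by (cases m)
  have mi: "poly_in {2,3} m1" "poly_in {3} m2" "poly_in {} m3" using m by (auto simp: mm triples3_def)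
  have d: "poly_in {2,3} d" unfolding d_def using a aut_subst_poly_in23[OF m]
    by (intro poly_in_diff poly_in_psubst) auto
  have conj: "comp3 m (a,0,0) = comp3 (d,0,0) (comp3 (a,0,0) m)"
  proof -
    have "comp3 (a,0,0) m = (a + m1, m2, m3)" using comp3_shift1_left[OF a m] by (simp add: mm)
    moreover have "(a + m1, m2, m3) \<in> triples3" using mi a by (simp add: triples3_def poly_in_add)
    ultimately show ?thesis using comp3_shift1_left[OF d, of "(a + m1, m2, m3)"] comp3_shift1_right[of m a]
      by (simp add: mm d_def algebra_simps)
  qed
  have comm: "comp3 (d,0,0) (a,0,0) = comp3 (a,0,0) (d,0,0)"
    using comp3_shift1_left[OF d shifts1_triples3[OF a]] comp3_shift1_left[OF a shifts1_triples3[OF d]]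
    by (simp add: add.commute)
  show ?thesis
    unfolding d_def[symmetric]
    by (rule commutator_inv_eq)
      (use conj comm a d m in \<open>auto simp: mult_U3_rep3 intro!: rep3_carrier shifts1_triples3\<close>)
qed

lemma inv_shift1: "poly_in {2,3} e \<Longrightarrow> inv\<^bsub>U3\<^esub> (rep3 (e,0,0)) = rep3 (-e,0,0)"
proof (rule U3_inv_rep3)
  assume e: "poly_in {2,3} e"
  have "psubst (aut_subst (e,0,0)) (-e) = -e"
    by (rule psubst_id_on[OF poly_in_uminus[OF e]]) (auto simp: aut_subst_def)
  then show "comp3 (e,0,0) (-e,0,0) = (0,0,0)" by (simp add: comp3_simp)
qed (auto simp: triples3_def poly_in_uminus)

lemma commutator_shift1_in_shifts1_iff:
  fixes a :: "'k::field nc"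
  assumes a: "poly_in {2,3} a" and m: "(m1,m2,m3) \<in> triples3"
  shows "commutator U3 (rep3 (a,0,0)) (inv\<^bsub>U3\<^esub> (rep3 (m1,m2,m3))) \<in> shifts1 A \<longleftrightarrow>
      psub (Vact (Rep_nc a) (Rep_nc m2, Rep_nc m3)) (Rep_nc a) \<in> A"
proof -
  have "psubst (aut_subst (m1,m2,m3)) a = psubst (vsubst m2 m3) a"
    by (rule psubst_agree[OF a]) (auto simp: aut_subst_def vsubst_def)
  then show ?thesis using commutator_shift1[OF a m]
    by (simp add: shifts1_rep3 Vact_bridge Rep_minus)
qed

lemma shift1_in_center_step_iff:
  fixes a :: "'k::field nc"
  assumes a: "poly_in {2,3} a"
  shows "rep3 (a,0,0) \<in> center_step U3 (shifts1 A) \<longleftrightarrow> Rep_nc a \<in> S_step A"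
proof -
  interpret group "U3 :: ('k ncpoly \<times> 'k ncpoly \<times> 'k ncpoly) monoid" by (rule U3_group)
  have car: "rep3 (a,0,0) \<in> carrier U3" using a by (simp add: rep3_carrier shifts1_triples3)
  note key = commutator_shift1_in_shifts1_iff[OF a]
  show ?thesis
  proof
    assume L: "rep3 (a,0,0) \<in> center_step U3 (shifts1 A)"
    show "Rep_nc a \<in> S_step A" unfolding S_step_def
    proof (safe)
      show "in_vars {2,3} (Rep_nc a)" using a by (simp add: poly_in_def)
      fix g h :: "'k ncpoly" assume gh: "(g, h) \<in> Vset"
      define G H where "G = Abs_nc g" and "H = Abs_nc h"
      have gh': "g = Rep_nc G" "h = Rep_nc H" by (simp_all add: G_def H_def Abs_nc_inverse)
      have m: "(0,G,H) \<in> triples3" using gh by (simp add: triples3_def Vset_iff gh')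
      have "inv\<^bsub>U3\<^esub> (rep3 (0,G,H)) \<in> carrier U3" using rep3_carrier[OF m] by (rule inv_closed)
      then have "commutator U3 (rep3 (a,0,0)) (inv\<^bsub>U3\<^esub> (rep3 (0,G,H))) \<in> shifts1 A"
        using L by (simp add: center_step_def)
      then show "psub (Vact (Rep_nc a) (g, h)) (Rep_nc a) \<in> A" using key[OF m] by (simp add: gh')
    qed
  next
    assume R: "Rep_nc a \<in> S_step A"
    show "rep3 (a,0,0) \<in> center_step U3 (shifts1 A)" unfolding center_step_def
    proof (safe intro!: car)
      fix f :: "'k ncpoly \<times> 'k ncpoly \<times> 'k ncpoly" assume f: "f \<in> carrier U3"
      obtain m where m: "m \<in> triples3" "inv\<^bsub>U3\<^esub> f = rep3 m" using triples3_ex f by blast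
      obtain m1 m2 m3 where mm: "m = (m1,m2,m3)" by (cases m)
      have ff: "f = inv\<^bsub>U3\<^esub> (rep3 m)" using m f by (metis inv_inv)
      have "(Rep_nc m2, Rep_nc m3) \<in> Vset" using m by (simp add: mm Vset_iff triples3_def)
      then have "psub (Vact (Rep_nc a) (Rep_nc m2, Rep_nc m3)) (Rep_nc a) \<in> A"
        using R by (simp add: S_step_def)
      then show "commutator U3 (rep3 (a,0,0)) f \<in> shifts1 A" using key m by (simp add: ff mm)
    qed
  qed
qed

section \<open>The upper central series of U_3\<close>

text \<open>An element one centre step above shifts1 B commutes with U_3 up to shifts of x_1, so the
  x_2- and x_3-components of x y and y x agree.\<close>
lemma center_step_comm_mod_shifts1:
  fixes x :: "'k::field trip"
  assumes f: "rep3 x \<in> center_step U3 (shifts1 B)" and y: "y \<in> triples3"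
  shows "snd (comp3 x y) = snd (comp3 y x)"
proof -
  interpret group "U3 :: ('k ncpoly \<times> 'k ncpoly \<times> 'k ncpoly) monoid" by (rule U3_group)
  have fc: "rep3 x \<in> carrier U3" using f by (simp add: center_step_def)
  have yc: "rep3 y \<in> carrier U3" using y by (rule rep3_carrier)
  have "commutator U3 (rep3 x) (rep3 y) \<in> shifts1 B" using f yc by (simp add: center_step_def)
  then obtain e where e: "commutator U3 (rep3 x) (rep3 y) = rep3 (e,0,0)"
    using shifts1_elem commutator_closed[OF fc yc] by blast
  have "rep3 (comp3 x y) = rep3 (comp3 (comp3 y x) (e,0,0))"
    using commutator_decomp[OF fc yc] by (simp add: e mult_U3_rep3)
  then show ?thesis by (simp add: rep3_inj comp3_shift1_right)
qed

text \<open>Commuting with (0,x_3,0) forces f_3 = 0; commuting with (0,0,1) makes f_2 invariant under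
  x_3 \<mapsto> x_3 + 1, hence a constant.\<close>
lemma comm_mod_shifts1_form:
  fixes x1 x2 x3 :: "'k::field_char_0 nc"
  assumes x: "(x1,x2,x3) \<in> triples3"
    and comm: "\<And>y. y \<in> triples3 \<Longrightarrow> snd (comp3 (x1,x2,x3) y) = snd (comp3 y (x1,x2,x3))"
  shows "x3 = 0" "\<exists>c. x2 = scalar c"
proof -
  have xi: "poly_in {2,3} x1" "poly_in {3} x2" "poly_in {} x3" using x by (auto simp: triples3_def)
  have "(0::'k nc, X 3, 0) \<in> triples3" by (simp add: triples3_def poly_in_X)
  from comm[OF this] have "x2 + (X 3 + x3) = X 3 + x2"
    using psubst_const[OF xi(3)] psubst_id_on[OF xi(2), of "aut_subst (0, X 3, 0)"]
    by (simp add: comp3_simp aut_subst_def)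
  then show "x3 = 0" by (simp add: algebra_simps)
  have "(0::'k nc, 0, 1) \<in> triples3" by (simp add: triples3_def poly_in_1)
  from comm[OF this] have "psubst (aut_subst (0,0,1)) x2 = x2" by (simp add: comp3_simp)
  then show "\<exists>c. x2 = scalar c"
    by (rule shift_invariant_const[OF xi(2), rotated]) (simp add: aut_subst_def)
qed

text \<open>If moreover f_2 = c, the commutator with (x_2^3,0,0) is (x_2^3 - (x_2 - c)^3, 0, 0), which
  must lie in shifts1 B \<subseteq> shifts1 S_{2\<omega>}; so c = 0.\<close>
lemma center_step_const_zero:
  fixes x1 :: "'k::field_char_0 nc"
  assumes f: "rep3 (x1, scalar c, 0) \<in> center_step U3 (shifts1 B)"
    and x: "(x1, scalar c, 0) \<in> triples3" and B: "B \<subseteq> S_idx TwoOmega"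
  shows "c = 0"
proof (rule ccontr)
  assume c: "c \<noteq> 0"
  interpret group "U3 :: ('k ncpoly \<times> 'k ncpoly \<times> 'k ncpoly) monoid" by (rule U3_group)
  let ?x = "(x1, scalar c, 0) :: 'k trip"
  define P :: "'k nc" where "P = X 2 ^ 3"
  have P: "poly_in {2,3} P" unfolding P_def by (intro poly_in_power poly_in_X) simp
  have Pc: "rep3 (P,0,0) \<in> carrier U3" using P by (intro rep3_carrier shifts1_triples3)
  have fc: "rep3 ?x \<in> carrier U3" using x by (rule rep3_carrier)
  have ix: "inv3 ?x \<in> triples3" "inv\<^bsub>U3\<^esub> (rep3 ?x) = rep3 (inv3 ?x)"
    using x by (simp_all add: inv3_triples3 U3_inv_rep3 comp3_inv3)
  have f_inv: "rep3 ?x = inv\<^bsub>U3\<^esub> (rep3 (inv3 ?x))" using ix(2) fc by (metis inv_inv)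
  obtain r1 where r: "inv3 ?x = (r1, - scalar c, 0)"
    using psubst_const[OF poly_in_scalar[of "{}" c]] by (simp add: inv3_def)
  have "psubst (aut_subst (inv3 ?x)) P = (X 2 - scalar c) ^ 3"
    unfolding P_def by (simp add: psubst_power finsupp_X r aut_subst_def)
  then have K: "commutator U3 (rep3 (P,0,0)) (rep3 ?x) = rep3 ((X 2 - scalar c) ^ 3 - P, 0, 0)"
    using commutator_shift1[OF P ix(1)] f_inv by simp
  have di: "poly_in {2,3} ((X 2 - scalar c) ^ 3 - P)"
    by (intro poly_in_diff poly_in_power P poly_in_X poly_in_scalar) simp
  have "commutator U3 (rep3 ?x) (rep3 (P,0,0)) = inv\<^bsub>U3\<^esub> (commutator U3 (rep3 (P,0,0)) (rep3 ?x))"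
    using commutator_swap[OF Pc fc] .
  also have "\<dots> = rep3 (P - (X 2 - scalar c) ^ 3, 0, 0)" using K inv_shift1[OF di] by simp
  finally have "commutator U3 (rep3 ?x) (rep3 (P,0,0)) = rep3 (P - (X 2 - scalar c) ^ 3, 0, 0)" .
  moreover have "commutator U3 (rep3 ?x) (rep3 (P,0,0)) \<in> shifts1 B"
    using f Pc by (simp add: center_step_def)
  ultimately have "rep3 (P - (X 2 - scalar c) ^ 3, 0, 0) \<in> shifts1 B" by simp
  then have "Rep_nc (X 2 ^ 3 - (X 2 - scalar c) ^ 3) \<in> S_idx TwoOmega"
    using B by (auto simp: shifts1_rep3 P_def)
  then show False using cube_difference_not_in_S_two_omega[OF c] by blast
qed

lemma center_step_only_shifts1:
  fixes f :: "'k::field_char_0 ncpoly \<times> 'k ncpoly \<times> 'k ncpoly"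
  assumes f: "f \<in> center_step U3 (shifts1 B)" and B: "B \<subseteq> S_idx TwoOmega"
  shows "\<exists>a. poly_in {2,3} a \<and> f = rep3 (a,0,0)"
proof -
  have "f \<in> carrier U3" using f by (simp add: center_step_def)
  then obtain x1 x2 x3 where x: "(x1,x2,x3) \<in> triples3" and fx: "f = rep3 (x1,x2,x3)"
    using triples3_ex by (metis prod_cases3)
  have comm: "snd (comp3 (x1,x2,x3) y) = snd (comp3 y (x1,x2,x3))" if "y \<in> triples3" for y
    using center_step_comm_mod_shifts1 f fx that by blast
  obtain c where x3: "x3 = 0" and x2: "x2 = scalar c" using comm_mod_shifts1_form[OF x comm] by blast
  have "c = 0" using center_step_const_zero f x B unfolding fx x2 x3 by blast
  then show ?thesis using x fx x2 x3 by (auto simp: triples3_def)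
qed

lemma center_step_shifts1:
  assumes B: "(B :: 'k::field_char_0 ncpoly set) \<subseteq> S_idx TwoOmega"
  shows "center_step U3 (shifts1 B) = shifts1 (S_step B)"
proof
  show "center_step U3 (shifts1 B) \<subseteq> shifts1 (S_step B)"
  proof
    fix f assume f: "f \<in> center_step U3 (shifts1 B)"
    obtain a :: "'k nc" where a: "poly_in {2,3} a" "f = rep3 (a,0,0)"
      using center_step_only_shifts1[OF f B] by blast
    then show "f \<in> shifts1 (S_step B)"
      using f shift1_in_center_step_iff[OF a(1)] shifts1_rep3 by metis
  qed
next
  show "shifts1 (S_step B) \<subseteq> center_step U3 (shifts1 B)"
  proof
    fix f assume "f \<in> shifts1 (S_step B)"
    then obtain f1 where f1: "f = (f1, pzero, pzero)" "f1 \<in> S_step B" by (auto simp: shifts1_def)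
    define a :: "'k nc" where "a = Abs_nc f1"
    have a: "poly_in {2,3} a" using f1 by (simp add: a_def poly_in_def S_step_def Abs_nc_inverse)
    have "f = rep3 (a,0,0)" by (simp add: f1 a_def rep3_simp Abs_nc_inverse Rep_zero)
    then show "f \<in> center_step U3 (shifts1 B)"
      using shift1_in_center_step_iff[OF a] f1 by (simp add: a_def Abs_nc_inverse)
  qed
qed

text \<open>Transporting the step equation along the stages gives Z_\<alpha> = shifts1 S_\<alpha>.\<close>
theorem theorem2:
  fixes \<alpha> :: ord_idx
  assumes "\<alpha> \<noteq> Fin 0"
  shows "hypercenter (U3 :: ('k::field_char_0 ncpoly \<times> 'k ncpoly \<times> 'k ncpoly) monoid) \<alpha>
           = {(f1, pzero, pzero) | f1. f1 \<in> (S_idx \<alpha> :: 'k ncpoly set)}"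
proof -
  have one: "{\<one>\<^bsub>U3\<^esub>} = shifts1 {pzero}" by (simp add: U3_one shifts1_def rep3_simp Rep_zero)
  have step: "center_step U3 (shifts1 B) = shifts1 (S_step B)"
    if "B \<subseteq> stage S_step {pzero} TwoOmega" for B :: "'k ncpoly set"
    using that by (intro center_step_shifts1) (simp add: S_idx_def)
  have union: "(\<Union>n. shifts1 (A n)) = shifts1 (\<Union>n. A n)" for A :: "nat \<Rightarrow> 'k ncpoly set"
    by (auto simp: shifts1_def)
  have "stage (center_step U3) (shifts1 {pzero :: 'k ncpoly}) \<alpha> = shifts1 (stage S_step {pzero} \<alpha>)"
    by (rule stage_transfer[where G = S_step and T = shifts1, OF step union])
  then show ?thesis by (simp add: hypercenter_def S_idx_def one shifts1_def)
qed

end
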